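(* Let $M$ be a topological manifold of dimension $n$ and let $B$ be a standard open ball in $M$. Then the subgroup of $\mathrm{Homeo}_0(M)$ consisting of homeomorphisms supported in $B$ is strongly distorted in $\mathrm{Homeo}_0(M)$.
   Context: $\mathrm{Homeo}_0(M)$ is the identity component of the homeomorphism group of $M$ with the compact-open topology. A standard open ball is an open subset of $M$ whose closure is homeomorphic to the closed unit ball in $\mathbb R^n$ and whose boundary is a locally flat $(n-1)$-sphere. The support of a homeomorphism is the closure of the set of points it moves. A subset $A$ of a group $G$ is strongly distorted in $G$ if there are $m\in\mathbb N$ and $(w_n)\subset\mathbb N$ such that for every sequence $(a_n)\subset A$ there is $S\subset G$ of cardinality $m$ with $a_n\in S^{w_n}=\{s_1\cdots s_{w_n}: s_i\in S\}$ for all $n$. *)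

theory Defs
  imports "HOL-Analysis.Analysis"
begin

definition topological_manifold ::
  "'m::{t2_space, second_countable_topology} itself \<Rightarrow> 'n::finite itself \<Rightarrow> bool" where
  "topological_manifold TYPE('m) TYPE('n) \<longleftrightarrow>
     (\<forall>x::'m. \<exists>U. open U \<and> x \<in> U \<and>
        (\<exists>V :: (real^'n) set. open V \<and> U homeomorphic V))"

definition locally_flat_hypersurface :: "'n::finite itself \<Rightarrow> 'm::topological_space set \<Rightarrow> bool" where
  "locally_flat_hypersurface TYPE('n) S \<longleftrightarrow>
     (\<forall>p\<in>S. \<exists>U. open U \<and> p \<in> U \<and>
        (\<exists>(h :: 'm \<Rightarrow> real^'n) g i. homeomorphism U UNIV h g \<and>
              h ` (U \<inter> S) = {x. x $ i = 0}))"

definition standard_open_ball :: "'n::finite itself \<Rightarrow> 'm::topological_space set \<Rightarrow> bool" where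
  "standard_open_ball TYPE('n) B \<longleftrightarrow>
     open B \<and> closure B homeomorphic (cball (0::real^'n) 1) \<and>
     frontier B homeomorphic (sphere (0::real^'n) 1) \<and>
     locally_flat_hypersurface TYPE('n) (frontier B)"

definition Homeo :: "('m::topological_space \<Rightarrow> 'm) set" where
  "Homeo = {f. \<exists>g. homeomorphism UNIV UNIV f g}"

definition compact_open_topology :: "('a::topological_space \<Rightarrow> 'b::topological_space) topology" where
  "compact_open_topology =
     topology_generated_by {{f. f ` K \<subseteq> U} | K U. compact K \<and> open U}"

definition Homeo0 :: "('m::topological_space \<Rightarrow> 'm) set" where
  "Homeo0 = connected_component_of_set (subtopology compact_open_topology Homeo) id"

definition support :: "('a::topological_space \<Rightarrow> 'a) \<Rightarrow> 'a set" where
  "support f = closure {x. f x \<noteq> x}"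

definition word_power :: "('a \<Rightarrow> 'a) set \<Rightarrow> nat \<Rightarrow> ('a \<Rightarrow> 'a) set" where
  "word_power S w = {foldr (\<circ>) l id | l. length l = w \<and> set l \<subseteq> S}"

definition strongly_distorted :: "('a \<Rightarrow> 'a) set \<Rightarrow> ('a \<Rightarrow> 'a) set \<Rightarrow> bool" where
  "strongly_distorted G A \<longleftrightarrow>
     (\<exists>m::nat. \<exists>w::nat \<Rightarrow> nat. \<forall>a::nat \<Rightarrow> ('a \<Rightarrow> 'a). (\<forall>k. a k \<in> A) \<longrightarrow>
        (\<exists>S. S \<subseteq> G \<and> finite S \<and> card S = m \<and> (\<forall>k. a k \<in> word_power S (w k))))"

end

theory Submission
  imports Defs
begin

(* The chart of the standard ball identifies homeomorphisms supported in B with homeomorphisms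
   of R^n supported in the closed unit ball, and the Alexander trick puts all of them into
   Homeo_0(M). Let g_k be such maps, g_k fixing everything outside the ball of radius r_k < 1.
   A fixed radial homeomorphism P, stretching the sphere of radius 1 - 0.99^(2^k) beyond radius
   r_k, and the k-th iterate of a fixed radial map Q, which squares the distance to the unit
   sphere, conjugate every g_k into a map y_k supported in a fixed small ball K. Take
   contractions V and W whose iterates move K, resp. a neighbourhood L of the V-orbit of K, to
   pairwise disjoint sets shrinking to a point. Let A_k be the infinite product of the
   conjugates V^i y_k V^-i, and H the infinite product of the conjugates W^k A_k W^-k. Then
   y_k = F_k V F_k^-1 V^-1 with F_k = W^-k H W^k, so g_k is a word of length 6k + 6 in
   P, Q, V, W, H and their inverses. *)

section \<open>Homeomorphisms supported in the unit ball\<close>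

lemma bij_image_eq_if_fixes_outside:
  assumes "bij f" and "\<And>x. x \<notin> K \<Longrightarrow> f x = x"
  shows "f ` K = K"
proof -
  have "f x \<notin> K" if "x \<notin> K" for x
    using that assms(2) by simp
  moreover have "x \<notin> K" if "f x \<notin> K" for x
    using that assms by (metis bij_is_inj injD)
  ultimately have "f -` K = K"
    by blast
  then show ?thesis
    using assms(1) by (metis bij_is_surj surj_image_vimage_eq)
qed

text \<open>Surjectivity is not part of the definition: it follows from invariance of domain.\<close>

definition ball_homeos :: "('a::euclidean_space \<Rightarrow> 'a) set" where
  "ball_homeos = {f. continuous_on UNIV f \<and> inj f \<and> (\<forall>x. 1 \<le> norm x \<longrightarrow> f x = x)}"

lemma ball_homeosI:
  assumes "continuous_on UNIV f" "inj f" "\<And>x. 1 \<le> norm x \<Longrightarrow> f x = x"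
  shows "f \<in> ball_homeos"
  using assms unfolding ball_homeos_def by auto

lemma ball_homeos_continuous_on: "f \<in> ball_homeos \<Longrightarrow> continuous_on S f"
  unfolding ball_homeos_def using continuous_on_subset by blast

lemma ball_homeos_inj: "f \<in> ball_homeos \<Longrightarrow> inj f"
  unfolding ball_homeos_def by auto

lemma ball_homeos_fixed: "f \<in> ball_homeos \<Longrightarrow> 1 \<le> norm x \<Longrightarrow> f x = x"
  unfolding ball_homeos_def by auto

lemma ball_homeos_surj:
  fixes f :: "'a::euclidean_space \<Rightarrow> 'a"
  assumes f: "f \<in> ball_homeos"
  shows "surj f"
proof -
  have "open (range f)"
    using f by (intro invariance_of_domain_gen) (auto simp: ball_homeos_def)
  moreover have "range f = f ` cball 0 1 \<union> - ball 0 1"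
  proof -
    have "f x \<in> f ` cball 0 1 \<union> - ball 0 1" for x
      using ball_homeos_fixed[OF f, of x] by (cases "norm x \<le> 1") auto
    moreover have "y \<in> range f" if "y \<in> - ball 0 1" for y
      using that ball_homeos_fixed[OF f, of y] by (metis ComplD mem_ball_0 not_less rangeI)
    ultimately show ?thesis by blast
  qed
  then have "closed (range f)"
    using f by (simp add: closed_Un compact_imp_closed compact_continuous_image
        ball_homeos_continuous_on open_ball closed_Compl)
  ultimately show ?thesis
    using clopen by blast
qed

lemma ball_homeos_bij: "f \<in> ball_homeos \<Longrightarrow> bij f"
  using ball_homeos_surj ball_homeos_inj bij_def by blast

lemma ball_homeos_inv_f_f [simp]: "f \<in> ball_homeos \<Longrightarrow> inv f (f x) = x"
  by (meson ball_homeos_inj inv_f_f)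

lemma ball_homeos_f_inv_f [simp]: "f \<in> ball_homeos \<Longrightarrow> f (inv f x) = x"
  by (meson ball_homeos_surj surj_f_inv_f)

lemma ball_homeos_homeomorphism:
  fixes f :: "'a::euclidean_space \<Rightarrow> 'a"
  assumes f: "f \<in> ball_homeos"
  shows "homeomorphism UNIV UNIV f (inv f)"
proof -
  have "continuous_on (range f) (inv f)"
    using f by (intro continuous_on_inverse_open) (auto simp: ball_homeos_def)
  then show ?thesis
    using f ball_homeos_surj[OF f] ball_homeos_continuous_on[OF f]
    by (auto simp: homeomorphism_def ball_homeos_inj inj_imp_surj_inv)
qed

lemma ball_homeos_inv: "f \<in> ball_homeos \<Longrightarrow> inv f \<in> ball_homeos"
  by (intro ball_homeosI)
    (auto simp: ball_homeos_homeomorphism[THEN homeomorphism_cont2] ball_homeos_bij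
      bij_imp_bij_inv bij_is_inj ball_homeos_fixed intro: inv_f_eq ball_homeos_inj)

lemma ball_homeos_comp:
  assumes "f \<in> ball_homeos" "g \<in> ball_homeos"
  shows "f \<circ> g \<in> ball_homeos"
proof (rule ball_homeosI)
  show "continuous_on UNIV (f \<circ> g)"
    using assms by (metis ball_homeos_continuous_on continuous_on_compose)
  show "inj (f \<circ> g)"
    using assms by (simp add: ball_homeos_inj inj_compose)
qed (simp add: assms ball_homeos_fixed)

lemma ball_homeos_id: "id \<in> ball_homeos"
  by (rule ball_homeosI) auto

lemma ball_homeos_funpow: "f \<in> ball_homeos \<Longrightarrow> f ^^ k \<in> ball_homeos"
  by (induction k) (auto simp: ball_homeos_id ball_homeos_comp)

lemma ball_homeos_norm_less: "f \<in> ball_homeos \<Longrightarrow> norm x < 1 \<Longrightarrow> norm (f x) < 1"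
  by (metis ball_homeos_fixed ball_homeos_inj inj_eq not_less)

lemma ball_homeos_norm_le: "f \<in> ball_homeos \<Longrightarrow> norm x \<le> 1 \<Longrightarrow> norm (f x) \<le> 1"
  by (metis ball_homeos_norm_less ball_homeos_fixed order.order_iff_strict)

lemma ball_homeos_image_eq:
  "f \<in> ball_homeos \<Longrightarrow> (\<And>x. x \<notin> K \<Longrightarrow> f x = x) \<Longrightarrow> f ` K = K"
  by (rule bij_image_eq_if_fixes_outside[OF ball_homeos_bij])

lemma ball_homeos_maps_into:
  "f \<in> ball_homeos \<Longrightarrow> (\<And>x. x \<notin> K \<Longrightarrow> f x = x) \<Longrightarrow> x \<in> K \<Longrightarrow> f x \<in> K"
  using ball_homeos_image_eq by blast

definition radial_map :: "'a::euclidean_space \<Rightarrow> (real \<Rightarrow> real) \<Rightarrow> 'a \<Rightarrow> 'a" where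
  "radial_map c l x = c + l (norm (x - c)) *\<^sub>R (x - c)"

lemma norm_radial_map:
  assumes "\<And>t. 0 \<le> t \<Longrightarrow> 0 < l t"
  shows "norm (radial_map c l x - c) = norm (x - c) * l (norm (x - c))"
  using assms[of "norm (x - c)"] by (simp add: radial_map_def)

lemma radial_map_in_ball_homeos:
  fixes c :: "'a::euclidean_space"
  assumes cont: "continuous_on UNIV l" and pos: "\<And>t. 0 \<le> t \<Longrightarrow> 0 < l t"
    and strict: "\<And>s t. 0 \<le> s \<Longrightarrow> s < t \<Longrightarrow> s * l s < t * l t"
    and one: "\<And>x. 1 \<le> norm x \<Longrightarrow> l (norm (x - c)) = 1"
  shows "radial_map c l \<in> ball_homeos"
proof (rule ball_homeosI)
  show "continuous_on UNIV (radial_map c l)"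
    unfolding radial_map_def by (intro continuous_intros continuous_on_compose2[OF cont]) auto
  show "radial_map c l x = x" if "1 \<le> norm x" for x
    using one[OF that] by (simp add: radial_map_def)
  show "inj (radial_map c l)"
  proof (rule injI)
    fix x y assume eq: "radial_map c l x = radial_map c l y"
    then have "norm (x - c) * l (norm (x - c)) = norm (y - c) * l (norm (y - c))"
      by (metis norm_radial_map pos)
    then have "norm (x - c) = norm (y - c)"
      using strict[OF norm_ge_zero, of "x - c" "norm (y - c)"]
        strict[OF norm_ge_zero, of "y - c" "norm (x - c)"]
      by (metis less_irrefl linorder_neqE_linordered_idom)
    then show "x = y"
      using eq pos[of "norm (x - c)"] by (simp add: radial_map_def)
  qed
qed

definition contraction_at :: "'a::euclidean_space \<Rightarrow> real \<Rightarrow> 'a \<Rightarrow> 'a" where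
  "contraction_at c a = radial_map c (\<lambda>t. max (1/4) (min 1 (t / a - 3/4)))"

lemma contraction_at_in_ball_homeos:
  fixes c :: "'a::euclidean_space"
  assumes a: "0 < a" and c: "norm c + 7 * a / 4 \<le> 1"
  shows "contraction_at c a \<in> ball_homeos"
  unfolding contraction_at_def
proof (rule radial_map_in_ball_homeos)
  let ?l = "\<lambda>t. max (1/4) (min 1 (t / a - 3/4))"
  show "continuous_on UNIV ?l"
    using a by (intro continuous_intros) auto
  show "0 < ?l t" for t
    by simp
  show "s * ?l s < t * ?l t" if "0 \<le> s" "s < t" for s t
  proof -
    have "s * ?l s \<le> s * ?l t"
      using that a by (intro mult_left_mono max.mono min.mono) (auto simp: divide_right_mono)
    also have "\<dots> < t * ?l t"
      using that by (intro mult_strict_right_mono) auto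
    finally show ?thesis .
  qed
  show "?l (norm (x - c)) = 1" if "1 \<le> norm x" for x
  proof -
    have "7 * a / 4 \<le> norm (x - c)"
      using that c norm_triangle_ineq[of "x - c" c] by simp
    then have "1 \<le> norm (x - c) / a - 3/4"
      using a by (simp add: field_simps)
    then show ?thesis
      by simp
  qed
qed

lemma contraction_at_near:
  assumes "0 < a" "norm (x - c) \<le> a"
  shows "contraction_at c a x = c + (1/4) *\<^sub>R (x - c)"
proof -
  have "norm (x - c) / a - 3/4 \<le> 1/4"
    using assms by (simp add: field_simps)
  then have "max (1/4) (min 1 (norm (x - c) / a - 3/4)) = 1/4"
    by (intro max.absorb1 min.coboundedI2)
  then show ?thesis
    by (simp only: contraction_at_def radial_map_def)
qed

lemma contraction_at_far:
  assumes "0 < a" "7 * a / 4 \<le> norm (x - c)"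
  shows "contraction_at c a x = x"
proof -
  have "1 \<le> norm (x - c) / a - 3/4"
    using assms by (simp add: field_simps)
  then show ?thesis
    by (simp add: contraction_at_def radial_map_def)
qed

lemma funpow_contraction_at_near:
  assumes "0 < a" "norm (x - c) \<le> a"
  shows "(contraction_at c a ^^ i) x = c + (1/4) ^ i *\<^sub>R (x - c)"
proof (induction i)
  case (Suc i)
  have "(1/4) ^ i * norm (x - c) \<le> 1 * a"
    using assms by (intro mult_mono) (auto simp: power_le_one)
  then show ?case
    using Suc assms(1) by (simp add: contraction_at_near)
qed simp

definition annulus :: "'a::real_normed_vector \<Rightarrow> real \<Rightarrow> real \<Rightarrow> 'a set" where
  "annulus c r1 r2 = {z. r1 \<le> norm (z - c) \<and> norm (z - c) \<le> r2}"

lemma cball_subset_annulus: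
  fixes c d :: "'a::real_normed_vector"
  shows "cball c R \<subseteq> annulus d (norm (c - d) - R) (norm (c - d) + R)"
proof
  fix z assume "z \<in> cball c R"
  then have "norm (z - c) \<le> R"
    by (simp add: dist_norm norm_minus_commute)
  moreover have "norm (z - d) \<le> norm (z - c) + norm (c - d)"
    using norm_triangle_ineq[of "z - c" "c - d"] by simp
  moreover have "norm (c - d) \<le> norm (z - c) + norm (z - d)"
    using norm_triangle_ineq[of "c - z" "z - d"] by (simp add: norm_minus_commute)
  ultimately show "z \<in> annulus d (norm (c - d) - R) (norm (c - d) + R)"
    unfolding annulus_def by auto
qed

lemma funpow_contraction_at_image_annulus:
  assumes "0 < a" "b2 \<le> a" "K \<subseteq> annulus c b1 b2"
  shows "(contraction_at c a ^^ i) ` K \<subseteq> annulus c (b1 / 4 ^ i) (b2 / 4 ^ i)"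
proof
  fix z assume "z \<in> (contraction_at c a ^^ i) ` K"
  then obtain x where x: "x \<in> annulus c b1 b2" and z: "z = (contraction_at c a ^^ i) x"
    using assms(3) by auto
  moreover have "norm (x - c) \<le> a"
    using x assms(2) by (simp add: annulus_def)
  ultimately have "z - c = (1/4) ^ i *\<^sub>R (x - c)"
    using funpow_contraction_at_near[OF assms(1), of x c i] by simp
  then show "z \<in> annulus c (b1 / 4 ^ i) (b2 / 4 ^ i)"
    using x by (simp add: annulus_def power_one_over divide_right_mono)
qed

section \<open>Infinite products along a shrinking orbit\<close>

text \<open>For homeomorphisms \<open>y i\<close> supported in \<open>K\<close>, the conjugates \<open>v\<^sup>i \<circ> y i \<circ> v\<^sup>-\<^sup>i\<close> have
  disjoint supports shrinking to \<open>c\<close>; their infinite product is a homeomorphism, being the uniform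
  limit of the finite products.\<close>

locale shrinking_orbit =
  fixes v :: "'a::euclidean_space \<Rightarrow> 'a" and K :: "'a set" and c :: 'a and \<delta> :: real
  assumes v_in: "v \<in> ball_homeos"
    and orbit_disjoint: "\<And>i j. i \<noteq> j \<Longrightarrow> (v ^^ i) ` K \<inter> (v ^^ j) ` K = {}"
    and orbit_shrinks: "\<And>i. (v ^^ i) ` K \<subseteq> cball c (\<delta> / 2 ^ i)"
    and orbit_in_ball: "\<And>i. (v ^^ i) ` K \<subseteq> ball 0 1"
    and nonneg: "0 \<le> \<delta>"
begin

lemma funpow_in: "v ^^ i \<in> ball_homeos"
  by (rule ball_homeos_funpow[OF v_in])

lemma image_funpow_Suc: "(v ^^ Suc i) ` K = v ` (v ^^ i) ` K"
  by (simp add: image_comp)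

definition conj_piece :: "(nat \<Rightarrow> 'a \<Rightarrow> 'a) \<Rightarrow> nat \<Rightarrow> 'a \<Rightarrow> 'a" where
  "conj_piece y i = (v ^^ i) \<circ> y i \<circ> inv (v ^^ i)"

definition orbit_product :: "(nat \<Rightarrow> 'a \<Rightarrow> 'a) \<Rightarrow> 'a \<Rightarrow> 'a" where
  "orbit_product y z =
     (if \<exists>i. z \<in> (v ^^ i) ` K then conj_piece y (SOME i. z \<in> (v ^^ i) ` K) z else z)"

lemma orbit_product_piece:
  assumes "z \<in> (v ^^ i) ` K"
  shows "orbit_product y z = conj_piece y i z"
proof -
  have "z \<in> (v ^^ (SOME i. z \<in> (v ^^ i) ` K)) ` K"
    using assms by (rule someI)
  then have "(SOME i. z \<in> (v ^^ i) ` K) = i"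
    using assms orbit_disjoint by blast
  then show ?thesis
    using assms unfolding orbit_product_def by auto
qed

lemma orbit_product_outside: "(\<And>i. z \<notin> (v ^^ i) ` K) \<Longrightarrow> orbit_product y z = z"
  unfolding orbit_product_def by auto

context
  fixes y :: "nat \<Rightarrow> 'a \<Rightarrow> 'a"
  assumes y_in: "\<And>i. y i \<in> ball_homeos" and y_fixed: "\<And>i z. z \<notin> K \<Longrightarrow> y i z = z"
begin

lemma conj_piece_in: "conj_piece y i \<in> ball_homeos"
  unfolding conj_piece_def by (intro ball_homeos_comp ball_homeos_inv funpow_in y_in)

lemma conj_piece_fixed:
  assumes "z \<notin> (v ^^ i) ` K"
  shows "conj_piece y i z = z"
proof -
  have "inv (v ^^ i) z \<notin> K"
  proof
    assume "inv (v ^^ i) z \<in> K"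
    then have "(v ^^ i) (inv (v ^^ i) z) \<in> (v ^^ i) ` K"
      by (rule imageI)
    with assms show False
      using funpow_in by simp
  qed
  then show ?thesis
    using funpow_in by (simp add: conj_piece_def y_fixed)
qed

lemma conj_piece_image: "conj_piece y i ` (v ^^ i) ` K = (v ^^ i) ` K"
  using conj_piece_in conj_piece_fixed by (rule ball_homeos_image_eq)

lemma orbit_product_image_piece: "orbit_product y ` (v ^^ i) ` K = (v ^^ i) ` K"
proof -
  have "orbit_product y ` (v ^^ i) ` K = conj_piece y i ` (v ^^ i) ` K"
    by (intro image_cong refl orbit_product_piece)
  then show ?thesis
    using conj_piece_image by simp
qed

definition partial_product :: "nat \<Rightarrow> 'a \<Rightarrow> 'a" where
  "partial_product N z = (if \<exists>i<N. z \<in> (v ^^ i) ` K then orbit_product y z else z)"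

lemma partial_product_Suc: "partial_product (Suc N) = partial_product N \<circ> conj_piece y N"
proof
  fix z
  show "partial_product (Suc N) z = (partial_product N \<circ> conj_piece y N) z"
  proof (cases "z \<in> (v ^^ N) ` K")
    case True
    then have "conj_piece y N z \<in> (v ^^ N) ` K"
      using conj_piece_image by blast
    then have "\<not> (\<exists>i<N. conj_piece y N z \<in> (v ^^ i) ` K)"
      using orbit_disjoint less_not_refl3 by blast
    then have "partial_product N (conj_piece y N z) = conj_piece y N z"
      by (simp only: partial_product_def if_False)
    moreover have "partial_product (Suc N) z = conj_piece y N z"
      using True by (auto simp: partial_product_def orbit_product_piece)
    ultimately show ?thesis
      by simp
  next
    case False
    then have "(\<exists>i<Suc N. z \<in> (v ^^ i) ` K) = (\<exists>i<N. z \<in> (v ^^ i) ` K)"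
      by (auto simp: less_Suc_eq)
    then show ?thesis
      by (simp only: partial_product_def comp_apply conj_piece_fixed[OF False])
  qed
qed

lemma partial_product_in: "partial_product N \<in> ball_homeos"
proof (induction N)
  case 0
  have "partial_product 0 = id"
    by (auto simp: partial_product_def)
  then show ?case
    by (metis ball_homeos_id)
next
  case (Suc N)
  then show ?case
    unfolding partial_product_Suc by (intro ball_homeos_comp conj_piece_in)
qed

lemma dist_partial_product: "dist (partial_product N z) (orbit_product y z) \<le> 2 * \<delta> / 2 ^ N"
proof (cases "\<exists>i\<ge>N. z \<in> (v ^^ i) ` K")
  case no_late_piece: False
  have "partial_product N z = orbit_product y z"
  proof (cases "\<exists>i<N. z \<in> (v ^^ i) ` K")
    case False
    with no_late_piece have "\<And>i. z \<notin> (v ^^ i) ` K"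
      by (meson not_le)
    then have "orbit_product y z = z"
      by (rule orbit_product_outside)
    moreover have "partial_product N z = z"
      by (simp only: partial_product_def if_not_P[OF False])
    ultimately show ?thesis
      by simp
  qed (simp add: partial_product_def)
  then show ?thesis
    using nonneg by simp
next
  case True
  then obtain i where i: "N \<le> i" "z \<in> (v ^^ i) ` K"
    by blast
  have "z \<notin> (v ^^ j) ` K" if "j < N" for j
    using that i orbit_disjoint[of j i] by auto
  then have "\<not> (\<exists>j<N. z \<in> (v ^^ j) ` K)"
    by blast
  then have "partial_product N z = z"
    by (simp only: partial_product_def if_False)
  moreover have "orbit_product y z \<in> cball c (\<delta> / 2 ^ i)" "z \<in> cball c (\<delta> / 2 ^ i)"
    using i orbit_shrinks orbit_product_image_piece by blast+
  ultimately have "dist (partial_product N z) (orbit_product y z) \<le> 2 * (\<delta> / 2 ^ i)"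
    using dist_triangle2[of z "orbit_product y z" c] by (simp add: dist_commute)
  also have "\<dots> \<le> 2 * (\<delta> / 2 ^ N)"
    using i nonneg by (auto intro!: divide_left_mono power_increasing)
  finally show ?thesis
    by simp
qed

lemma continuous_on_orbit_product: "continuous_on UNIV (orbit_product y)"
proof (rule uniform_limit_theorem)
  show "\<forall>\<^sub>F N in sequentially. continuous_on UNIV (partial_product N)"
    by (intro always_eventually allI ball_homeos_continuous_on[OF partial_product_in])
  show "uniform_limit UNIV partial_product (orbit_product y) sequentially"
  proof (rule uniform_limitI)
    fix e :: real assume "0 < e"
    moreover have "(\<lambda>N. 2 * \<delta> / 2 ^ N) \<longlonglongrightarrow> 0"
      by (intro LIMSEQ_divide_realpow_zero) simp
    ultimately have "\<forall>\<^sub>F N in sequentially. 2 * \<delta> / 2 ^ N < e"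
      by (simp add: order_tendstoD)
    then show "\<forall>\<^sub>F N in sequentially. \<forall>z\<in>UNIV. dist (partial_product N z) (orbit_product y z) < e"
      by eventually_elim (use dist_partial_product in \<open>auto intro: le_less_trans\<close>)
  qed
qed simp

lemma orbit_product_inverse: "orbit_product (\<lambda>i. inv (y i)) (orbit_product y z) = z"
proof (cases "\<exists>i. z \<in> (v ^^ i) ` K")
  case True
  then obtain i where i: "z \<in> (v ^^ i) ` K"
    by blast
  then have "orbit_product y z \<in> (v ^^ i) ` K"
    using orbit_product_image_piece by blast
  then show ?thesis
    using i funpow_in y_in by (simp add: orbit_product_piece conj_piece_def)
qed (simp add: orbit_product_outside)

lemma orbit_product_in: "orbit_product y \<in> ball_homeos"
proof (rule ball_homeosI)
  show "continuous_on UNIV (orbit_product y)"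
    by (rule continuous_on_orbit_product)
  show "orbit_product y z = z" if "1 \<le> norm z" for z
  proof -
    have "z \<notin> ball 0 1"
      using that by simp
    then show ?thesis
      using orbit_in_ball by (intro orbit_product_outside) blast
  qed
  show "inj (orbit_product y)"
    by (rule inj_on_inverseI[where g = "orbit_product (\<lambda>i. inv (y i))"]) (rule orbit_product_inverse)
qed

lemma orbit_product_funpow:
  assumes "z \<in> K"
  shows "orbit_product y ((v ^^ k) z) = (v ^^ k) (y k z)"
proof -
  have "(v ^^ k) z \<in> (v ^^ k) ` K"
    using assms by blast
  then show ?thesis
    using funpow_in by (simp add: orbit_product_piece conj_piece_def)
qed

end

text \<open>This identity makes \<open>y0 = A \<circ> v \<circ> A\<^sup>-\<^sup>1 \<circ> v\<^sup>-\<^sup>1\<close> a commutator, where \<open>A\<close> is the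
  product of all conjugates of \<open>y0\<close>.\<close>

lemma orbit_product_const_comp:
  assumes y0_in: "y0 \<in> ball_homeos" and y0_fixed: "\<And>z. z \<notin> K \<Longrightarrow> y0 z = z"
  shows "orbit_product (\<lambda>_. y0) (v z) = y0 (v (orbit_product (\<lambda>_. y0) z))"
proof (cases "\<exists>i. z \<in> (v ^^ i) ` K")
  case True
  then obtain i w where w: "w \<in> K" and z: "z = (v ^^ i) w"
    by blast
  have "y0 w \<in> K"
    using w ball_homeos_image_eq[OF y0_in y0_fixed] by blast
  then have "(v ^^ Suc i) (y0 w) \<in> (v ^^ Suc i) ` K"
    by (rule imageI)
  moreover have "(v ^^ 0) ` K = K"
    by simp
  ultimately have "(v ^^ Suc i) (y0 w) \<notin> K"
    using orbit_disjoint[of "Suc i" 0] by blast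
  moreover have "orbit_product (\<lambda>_. y0) (v z) = (v ^^ Suc i) (y0 w)"
    using orbit_product_funpow[of "\<lambda>_. y0", OF y0_in y0_fixed w, of "Suc i"] z by simp
  moreover have "orbit_product (\<lambda>_. y0) z = (v ^^ i) (y0 w)"
    using orbit_product_funpow[of "\<lambda>_. y0", OF y0_in y0_fixed w, of i] z by simp
  ultimately show ?thesis
    using y0_fixed by simp
next
  case False
  then have A_z: "orbit_product (\<lambda>_. y0) z = z"
    by (simp add: orbit_product_outside)
  have "v z \<notin> (v ^^ Suc i) ` K" for i
    using False by (simp only: image_funpow_Suc inj_image_mem_iff[OF ball_homeos_inj[OF v_in]]) simp
  then have "orbit_product (\<lambda>_. y0) (v z) = y0 (v z)"
  proof (cases "v z \<in> K")
    case True
    then show ?thesis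
      using orbit_product_piece[of "v z" 0] by (simp add: conj_piece_def)
  next
    case False
    with \<open>\<And>i. v z \<notin> (v ^^ Suc i) ` K\<close> have "v z \<notin> (v ^^ i) ` K" for i
      by (cases i) auto
    then show ?thesis
      using False y0_fixed orbit_product_outside by simp
  qed
  then show ?thesis
    using A_z by simp
qed

end

lemma annulus_scaled_disjoint:
  assumes "0 < b1" "0 \<le> b2" "b2 < 4 * b1" "i \<noteq> j"
  shows "annulus c (b1 / 4 ^ i) (b2 / 4 ^ i) \<inter> annulus c (b1 / 4 ^ j) (b2 / 4 ^ j) = {}"
proof -
  have gap: "b2 / 4 ^ j < b1 / 4 ^ i" if "i < j" for i j
  proof -
    have "b2 / 4 ^ j \<le> b2 / 4 ^ Suc i"
      using that assms by (intro divide_left_mono power_increasing) auto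
    also have "\<dots> < b1 / 4 ^ i"
      using assms by (simp add: field_simps)
    finally show ?thesis .
  qed
  show ?thesis
    using assms(4) gap[of i j] gap[of j i] by (cases "i < j") (auto simp: annulus_def)
qed

lemma shrinking_orbit_contraction_at:
  fixes c :: "'a::euclidean_space"
  assumes a: "0 < a" "norm c + 7 * a / 4 \<le> 1" and K: "K \<subseteq> annulus c b1 b2"
    and b: "0 < b1" "0 \<le> b2" "b2 < 4 * b1" "b2 \<le> a" "norm c + b2 < 1"
  shows "shrinking_orbit (contraction_at c a) K c b2"
proof
  have image: "(contraction_at c a ^^ i) ` K \<subseteq> annulus c (b1 / 4 ^ i) (b2 / 4 ^ i)" for i
    using funpow_contraction_at_image_annulus[OF a(1) b(4) K] .
  show "(contraction_at c a ^^ i) ` K \<inter> (contraction_at c a ^^ j) ` K = {}"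
    if "i \<noteq> j" for i j
    using image[of i] image[of j] annulus_scaled_disjoint[OF b(1-3) that, of c] by blast
  have "annulus c (b1 / 4 ^ i) (b2 / 4 ^ i) \<subseteq> cball c (b2 / 2 ^ i)" for i
  proof -
    have "b2 / 4 ^ i \<le> b2 / 2 ^ i"
      using b by (intro divide_left_mono power_mono) auto
    then show ?thesis
      by (auto simp: annulus_def dist_norm norm_minus_commute)
  qed
  with image show "(contraction_at c a ^^ i) ` K \<subseteq> cball c (b2 / 2 ^ i)" for i
    by blast
  have "annulus c (b1 / 4 ^ i) (b2 / 4 ^ i) \<subseteq> ball 0 1" for i
  proof
    fix z assume z: "z \<in> annulus c (b1 / 4 ^ i) (b2 / 4 ^ i)"
    have "b2 * 1 \<le> b2 * 4 ^ i"
      using b(2) by (intro mult_left_mono) auto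
    then have "b2 / 4 ^ i \<le> b2"
      by (simp add: divide_le_eq)
    then show "z \<in> ball 0 1"
      using z b(5) norm_triangle_ineq[of c "z - c"] by (simp add: annulus_def)
  qed
  with image show "(contraction_at c a ^^ i) ` K \<subseteq> ball 0 1" for i
    by blast
  show "contraction_at c a \<in> ball_homeos"
    using contraction_at_in_ball_homeos[OF a] .
  show "0 \<le> b2"
    using b by simp
qed

section \<open>Pushing supports into a small ball\<close>

definition orbit_radius :: "nat \<Rightarrow> real" where
  "orbit_radius k = 1 - (99/100) ^ (2 ^ k)"

lemma orbit_radius_0: "orbit_radius 0 = 1/100"
  by (simp add: orbit_radius_def)

lemma orbit_radius_less_1: "orbit_radius k < 1"
  by (simp add: orbit_radius_def)

lemma orbit_radius_mono: "j \<le> k \<Longrightarrow> orbit_radius j \<le> orbit_radius k"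
  unfolding orbit_radius_def by (auto intro!: power_decreasing)

lemma orbit_radius_ge: "1/100 \<le> orbit_radius k"
  using orbit_radius_mono[of 0 k] orbit_radius_0 by simp

lemma orbit_radius_pos: "0 < orbit_radius k"
  using orbit_radius_ge[of k] by simp

lemma exists_orbit_radius_gt:
  assumes "t < 1"
  shows "\<exists>k. t < orbit_radius k"
proof -
  obtain n where n: "(99/100::real) ^ n < 1 - t"
    using real_arch_pow_inv[of "1 - t" "99/100"] assms by auto
  have "(99/100::real) ^ (2 ^ n) \<le> (99/100) ^ n"
    by (rule power_decreasing) (auto intro: less_imp_le[OF less_exp])
  then have "t < orbit_radius n"
    unfolding orbit_radius_def using n by linarith
  then show ?thesis
    by blast
qed

text \<open>For \<open>norm z \<le> 1\<close> the map \<open>gap_squaring\<close> satisfies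
  \<open>1 - norm (gap_squaring z) = (1 - norm z)\<^sup>2\<close>; so it pushes the sphere of radius
  \<open>orbit_radius k\<close> onto that of radius \<open>orbit_radius (Suc k)\<close>.\<close>

definition gap_squaring_factor :: "real \<Rightarrow> real" where
  "gap_squaring_factor t = 2 - min 1 t"

definition gap_squaring :: "'a::euclidean_space \<Rightarrow> 'a" where
  "gap_squaring = radial_map 0 gap_squaring_factor"

lemma gap_squaring_factor_strict_mono:
  assumes s: "0 \<le> s" and st: "s < t"
  shows "s * gap_squaring_factor s < t * gap_squaring_factor t"
proof (cases "t \<le> 1")
  case True
  then have "0 < (t - s) * (2 - s - t)"
    using st by (intro mult_pos_pos) auto
  then show ?thesis
    using True st by (simp add: gap_squaring_factor_def min_absorb2 algebra_simps)
next
  case False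
  have "s * (2 - s) \<le> 1" if "s \<le> 1"
    using that sum_squares_ge_zero[of "1 - s" 0] by (simp add: algebra_simps power2_eq_square)
  then show ?thesis
    using False st by (cases "s \<le> 1") (auto simp: gap_squaring_factor_def min_def)
qed

lemma orbit_radius_Suc:
  "orbit_radius (Suc k) = orbit_radius k * gap_squaring_factor (orbit_radius k)"
proof -
  have "(99/100::real) ^ (2 ^ Suc k) = ((99/100) ^ (2 ^ k))\<^sup>2"
    by (simp add: power_mult[symmetric] mult.commute)
  then show ?thesis
    using orbit_radius_less_1[of k]
    by (simp add: gap_squaring_factor_def orbit_radius_def power2_eq_square algebra_simps)
qed

lemma gap_squaring_in_ball_homeos: "gap_squaring \<in> ball_homeos"
  unfolding gap_squaring_def
proof (rule radial_map_in_ball_homeos)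
  show "continuous_on UNIV gap_squaring_factor"
    unfolding gap_squaring_factor_def by (intro continuous_intros)
  show "s * gap_squaring_factor s < t * gap_squaring_factor t" if "0 \<le> s" "s < t" for s t
    using that by (rule gap_squaring_factor_strict_mono)
qed (simp_all add: gap_squaring_factor_def)

lemma norm_gap_squaring: "norm (gap_squaring z) = norm z * gap_squaring_factor (norm z)"
  using norm_radial_map[of gap_squaring_factor 0 z]
  by (simp add: gap_squaring_def gap_squaring_factor_def)

lemma orbit_radius_less_norm_funpow_gap_squaring:
  assumes "1/100 < norm z"
  shows "orbit_radius k < norm ((gap_squaring ^^ k) z)"
proof (induction k)
  case 0
  then show ?case
    using assms by (simp add: orbit_radius_0)
next
  case (Suc k)
  then have "orbit_radius k * gap_squaring_factor (orbit_radius k)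
      < norm ((gap_squaring ^^ k) z) * gap_squaring_factor (norm ((gap_squaring ^^ k) z))"
    using orbit_radius_pos[of k] by (intro gap_squaring_factor_strict_mono) auto
  then show ?case
    by (simp add: orbit_radius_Suc norm_gap_squaring)
qed

lemma divide_max_le_one: "0 < (s::real) \<Longrightarrow> 0 \<le> t \<Longrightarrow> t / max s t \<le> 1"
  by (simp add: divide_le_eq_1 less_max_iff_disj)

lemma divide_max_mono:
  fixes s t u :: real
  assumes "0 < s" "0 \<le> t" "t \<le> u"
  shows "t / max s t \<le> u / max s u"
  using assms divide_max_le_one[of s t]
  by (cases "u \<le> s") (auto simp: max_def divide_right_mono)

lemma divide_max_strict_mono:
  fixes s t u :: real
  assumes "0 < s" "0 \<le> t" "t < u" "t < s"
  shows "t / max s t < u / max s u"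
  using assms by (cases "u \<le> s") (auto simp: max_def divide_strict_right_mono)

fun radius_gap :: "(nat \<Rightarrow> real) \<Rightarrow> nat \<Rightarrow> real" where
  "radius_gap r 0 = min 1 (1 - r 0)"
| "radius_gap r (Suc k) = min (radius_gap r k) (1 - r (Suc k))"

definition tail_weight :: "(nat \<Rightarrow> real) \<Rightarrow> nat \<Rightarrow> real" where
  "tail_weight r k = radius_gap r k / 2 ^ Suc k"

fun weight :: "(nat \<Rightarrow> real) \<Rightarrow> nat \<Rightarrow> real" where
  "weight r 0 = 1 - tail_weight r 0"
| "weight r (Suc k) = tail_weight r k - tail_weight r (Suc k)"

text \<open>On \<open>[0, 1]\<close> the radial profile \<open>t * push_factor r t\<close> equals
  \<open>\<Sum>j. weight r j * min 1 (t / orbit_radius j)\<close>. It is strictly increasing, and at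
  \<open>orbit_radius k\<close> it is at least \<open>weight r 0 + \<dots> + weight r k = 1 - tail_weight r k \<ge> r k\<close>.\<close>

definition push_factor :: "(nat \<Rightarrow> real) \<Rightarrow> real \<Rightarrow> real" where
  "push_factor r t = max 1 t * (\<Sum>j. weight r j / max (orbit_radius j) t)"

definition push_map :: "(nat \<Rightarrow> real) \<Rightarrow> 'a::euclidean_space \<Rightarrow> 'a" where
  "push_map r = radial_map 0 (push_factor r)"

context
  fixes r :: "nat \<Rightarrow> real"
  assumes r_less: "\<And>k. r k < 1"
begin

lemma radius_gap_pos: "0 < radius_gap r k"
  by (induction k) (use r_less in \<open>auto simp: min_def\<close>)

lemma radius_gap_le_1: "radius_gap r k \<le> 1"
  by (induction k) auto

lemma radius_gap_le: "radius_gap r k \<le> 1 - r k"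
  by (cases k) auto

lemma tail_weight_pos: "0 < tail_weight r k"
  unfolding tail_weight_def using radius_gap_pos by simp

lemma tail_weight_le: "tail_weight r k \<le> 1 / 2 ^ Suc k"
  unfolding tail_weight_def using radius_gap_le_1 by (intro divide_right_mono) auto

lemma tail_weight_le_gap: "tail_weight r k \<le> 1 - r k"
proof -
  have "(1::real) \<le> 2 ^ Suc k"
    by (rule one_le_power) simp
  then have "radius_gap r k / 2 ^ Suc k \<le> radius_gap r k / 1"
    using radius_gap_pos[of k] by (intro divide_left_mono) auto
  then show ?thesis
    using radius_gap_le[of k] by (simp add: tail_weight_def)
qed

lemma weight_pos: "0 < weight r k"
proof (cases k)
  case 0
  then show ?thesis
    using tail_weight_le[of 0] by simp
next
  case (Suc j)
  have "radius_gap r (Suc j) / 2 ^ Suc (Suc j) \<le> radius_gap r j / 2 ^ Suc (Suc j)"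
    by (intro divide_right_mono) auto
  also have "\<dots> < radius_gap r j / 2 ^ Suc j"
    using radius_gap_pos[of j] by (intro divide_strict_left_mono) auto
  finally show ?thesis
    using Suc by (simp add: tail_weight_def)
qed

lemma sum_weight: "(\<Sum>j<Suc k. weight r j) = 1 - tail_weight r k"
  by (induction k) auto

lemma weight_sums: "weight r sums 1"
proof -
  have "tail_weight r \<longlonglongrightarrow> 0"
  proof (rule tendsto_sandwich[of "\<lambda>_. 0" _ _ "\<lambda>k. 1 / 2 ^ Suc k"])
    show "\<forall>\<^sub>F k in sequentially. 0 \<le> tail_weight r k"
      using tail_weight_pos by (simp add: less_imp_le)
    show "\<forall>\<^sub>F k in sequentially. tail_weight r k \<le> 1 / 2 ^ Suc k"
      using tail_weight_le by simp
    show "(\<lambda>k. 1 / 2 ^ Suc k :: real) \<longlonglongrightarrow> 0"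
      by (rule LIMSEQ_Suc[OF LIMSEQ_divide_realpow_zero]) simp
  qed simp
  then have "(\<lambda>k. \<Sum>j<Suc k. weight r j) \<longlonglongrightarrow> 1"
    unfolding sum_weight by (auto intro: tendsto_eq_intros)
  then show ?thesis
    unfolding sums_def by (rule LIMSEQ_imp_Suc)
qed

lemma summable_weight: "summable (weight r)"
  using weight_sums sums_summable by blast

lemma suminf_weight: "(\<Sum>j. weight r j) = 1"
  using weight_sums sums_unique by metis

lemma norm_weight_divide_le: "norm (weight r j / max (orbit_radius j) t) \<le> 100 * weight r j"
proof -
  have "1/100 \<le> max (orbit_radius j) t"
    using orbit_radius_ge[of j] by simp
  then have "weight r j / max (orbit_radius j) t \<le> weight r j / (1/100)"
    using weight_pos[of j] by (intro divide_left_mono) auto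
  then show ?thesis
    using weight_pos[of j] orbit_radius_pos[of j] by simp
qed

lemma summable_weight_divide: "summable (\<lambda>j. weight r j / max (orbit_radius j) t)"
  by (rule summable_comparison_test[OF _ summable_mult[OF summable_weight, of 100]])
    (use norm_weight_divide_le in auto)

lemma summable_weight_ratio: "summable (\<lambda>j. weight r j * (t / max (orbit_radius j) t))"
  using summable_mult[OF summable_weight_divide[of t], of t] by (simp add: algebra_simps)

lemma continuous_on_suminf_weight_divide:
  "continuous_on UNIV (\<lambda>t. \<Sum>j. weight r j / max (orbit_radius j) t)"
proof (rule uniform_limit_theorem)
  show "uniform_limit UNIV (\<lambda>n t. \<Sum>j<n. weight r j / max (orbit_radius j) t)
      (\<lambda>t. \<Sum>j. weight r j / max (orbit_radius j) t) sequentially"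
    by (rule Weierstrass_m_test[OF _ summable_mult[OF summable_weight, of 100]])
      (rule norm_weight_divide_le)
  have "max (orbit_radius j) t \<noteq> 0" for j t
    using orbit_radius_pos[of j] by linarith
  then show "\<forall>\<^sub>F n in sequentially.
      continuous_on UNIV (\<lambda>t. \<Sum>j<n. weight r j / max (orbit_radius j) t)"
    by (intro always_eventually allI continuous_on_sum continuous_intros) auto
qed simp

lemma push_factor_pos: "0 < push_factor r t"
proof -
  have "0 < weight r j / max (orbit_radius j) t" for j
    using orbit_radius_pos[of j] weight_pos[of j] by (simp add: less_max_iff_disj)
  then have "0 < (\<Sum>j. weight r j / max (orbit_radius j) t)"
    by (intro suminf_pos summable_weight_divide)
  then show ?thesis
    unfolding push_factor_def by simp
qed

lemma push_profile:
  assumes "0 \<le> t" "t \<le> 1"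
  shows "t * push_factor r t = (\<Sum>j. weight r j * (t / max (orbit_radius j) t))"
proof -
  have "t * push_factor r t = t * (\<Sum>j. weight r j / max (orbit_radius j) t)"
    unfolding push_factor_def using assms by simp
  also have "\<dots> = (\<Sum>j. t * (weight r j / max (orbit_radius j) t))"
    by (rule suminf_mult[OF summable_weight_divide, symmetric])
  finally show ?thesis
    by (simp add: algebra_simps)
qed

lemma push_factor_eq_1:
  assumes "1 \<le> t"
  shows "push_factor r t = 1"
proof -
  have "max (orbit_radius j) t = t" for j
    using orbit_radius_less_1[of j] assms by simp
  then have "(\<Sum>j. weight r j / max (orbit_radius j) t) = (\<Sum>j. weight r j) / t"
    by (simp add: suminf_divide[OF summable_weight])
  then show ?thesis
    unfolding push_factor_def using assms by (simp add: suminf_weight)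
qed

lemma push_profile_le_1: "0 \<le> t \<Longrightarrow> t \<le> 1 \<Longrightarrow> t * push_factor r t \<le> 1"
proof -
  assume t: "0 \<le> t" "t \<le> 1"
  have "(\<Sum>j. weight r j * (t / max (orbit_radius j) t)) \<le> (\<Sum>j. weight r j)"
  proof (rule suminf_le[OF _ summable_weight_ratio summable_weight])
    show "weight r j * (t / max (orbit_radius j) t) \<le> weight r j" for j
      using divide_max_le_one[OF orbit_radius_pos t(1), of j] weight_pos[of j]
      by (intro mult_left_le) auto
  qed
  then show ?thesis
    using push_profile[OF t] suminf_weight by simp
qed

lemma push_profile_strict_mono:
  assumes s: "0 \<le> s" and st: "s < t"
  shows "s * push_factor r s < t * push_factor r t"
proof (cases "t \<le> 1")
  case True
  obtain k where k: "s < orbit_radius k"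
    using exists_orbit_radius_gt[of s] st True by auto
  let ?f = "\<lambda>j. weight r j * (s / max (orbit_radius j) s)"
  let ?g = "\<lambda>j. weight r j * (t / max (orbit_radius j) t)"
  have "?f j \<le> ?g j" for j
    using divide_max_mono[OF orbit_radius_pos s less_imp_le[OF st], of j] weight_pos[of j]
    by (intro mult_left_mono) auto
  moreover have "?f k < ?g k"
    using divide_max_strict_mono[OF orbit_radius_pos s st k] weight_pos[of k]
    by (intro mult_strict_left_mono) auto
  ultimately have "0 < (\<Sum>j. ?g j - ?f j)"
    by (intro suminf_pos2[of _ k] summable_diff summable_weight_ratio) auto
  then have "(\<Sum>j. ?f j) < (\<Sum>j. ?g j)"
    using suminf_diff[OF summable_weight_ratio[of t] summable_weight_ratio[of s]] by linarith
  then show ?thesis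
    using push_profile[OF s] push_profile[of t] s st True by simp
next
  case t_gt: False
  have "s * push_factor r s < t"
  proof (cases "s \<le> 1")
    case True
    then show ?thesis
      using push_profile_le_1[OF s True] t_gt by linarith
  next
    case False
    then show ?thesis
      using push_factor_eq_1[of s] st by simp
  qed
  then show ?thesis
    using t_gt push_factor_eq_1[of t] by simp
qed

lemma push_profile_orbit_radius: "r k \<le> orbit_radius k * push_factor r (orbit_radius k)"
proof -
  let ?f = "\<lambda>j. weight r j * (orbit_radius k / max (orbit_radius j) (orbit_radius k))"
  have "weight r j = ?f j" if "j < Suc k" for j
  proof -
    have "max (orbit_radius j) (orbit_radius k) = orbit_radius k"
      using that by (intro max_absorb2 orbit_radius_mono) simp
    then show ?thesis
      using orbit_radius_pos[of k] by simp
  qed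
  then have "1 - tail_weight r k = (\<Sum>j<Suc k. ?f j)"
    unfolding sum_weight[symmetric] by (intro sum.cong) auto
  also have "\<dots> \<le> (\<Sum>j. ?f j)"
  proof (rule sum_le_suminf[OF summable_weight_ratio])
    show "0 \<le> ?f j" for j
      using weight_pos[of j] orbit_radius_pos[of k]
      by (intro mult_nonneg_nonneg divide_nonneg_nonneg) (simp_all add: le_max_iff_disj)
  qed simp
  also have "\<dots> = orbit_radius k * push_factor r (orbit_radius k)"
    by (rule push_profile[symmetric]) (use orbit_radius_pos[of k] orbit_radius_less_1[of k] in auto)
  finally show ?thesis
    using tail_weight_le_gap[of k] by linarith
qed

lemma push_map_in_ball_homeos: "push_map r \<in> ball_homeos"
  unfolding push_map_def
proof (rule radial_map_in_ball_homeos)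
  show "continuous_on UNIV (push_factor r)"
    unfolding push_factor_def by (intro continuous_intros continuous_on_suminf_weight_divide)
  show "s * push_factor r s < t * push_factor r t" if "0 \<le> s" "s < t" for s t
    using that by (rule push_profile_strict_mono)
qed (simp_all add: push_factor_pos push_factor_eq_1)

lemma less_norm_push_map:
  assumes "orbit_radius k < norm z"
  shows "r k < norm (push_map r z)"
proof -
  have "r k \<le> orbit_radius k * push_factor r (orbit_radius k)"
    by (rule push_profile_orbit_radius)
  also have "\<dots> < norm z * push_factor r (norm z)"
    using assms orbit_radius_pos[of k] by (intro push_profile_strict_mono) auto
  finally show ?thesis
    using norm_radial_map[of "push_factor r" 0 z] push_factor_pos by (simp add: push_map_def)
qed

end

section \<open>Distortion in the unit ball\<close>

lemma commute_if_agrees_on: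
  assumes \<Phi>_in: "\<Phi> \<in> ball_homeos" and A_in: "A \<in> ball_homeos" and A_fixed: "\<And>z. z \<notin> L \<Longrightarrow> A z = z"
    and V_in: "V \<in> ball_homeos" and V_fixed: "\<And>z. z \<notin> L \<Longrightarrow> V z = z"
    and y_fixed: "\<And>z. z \<notin> K \<Longrightarrow> y z = z" and K: "K \<subseteq> L"
    and agree: "\<And>z. z \<in> L \<Longrightarrow> \<Phi> z = A z" and A_comp: "\<And>z. A (V z) = y (V (A z))"
  shows "y (V (\<Phi> z)) = \<Phi> (V z)"
proof (cases "z \<in> L")
  case True
  moreover have "V z \<in> L" "A z \<in> L"
    using True V_in V_fixed A_in A_fixed by (auto intro: ball_homeos_maps_into)
  ultimately show ?thesis
    by (simp add: agree A_comp)
next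
  case False
  have "\<Phi> z \<notin> L"
  proof
    assume "\<Phi> z \<in> L"
    then obtain z' where "z' \<in> L" "\<Phi> z = A z'"
      using ball_homeos_image_eq[OF A_in A_fixed] by (metis imageE)
    then have "\<Phi> z = \<Phi> z'"
      by (simp add: agree)
    then have "z = z'"
      by (rule injD[OF ball_homeos_inj[OF \<Phi>_in]])
    with \<open>z' \<in> L\<close> False show False
      by simp
  qed
  moreover from this have "\<Phi> z \<notin> K"
    using K by blast
  ultimately show ?thesis
    using False V_fixed y_fixed by simp
qed

lemma supported_sequence_eq_commutators:
  assumes V: "shrinking_orbit V K c1 \<delta>1" and W: "shrinking_orbit W L c2 \<delta>2"
    and V_fixed: "\<And>z. z \<notin> L \<Longrightarrow> V z = z" and V_orbit: "\<And>i. (V ^^ i) ` K \<subseteq> L"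
    and y_in: "\<And>k. y k \<in> ball_homeos" and y_fixed: "\<And>k z. z \<notin> K \<Longrightarrow> y k z = z"
  obtains H where "H \<in> ball_homeos"
    and "\<And>k. y k = inv (W ^^ k) \<circ> H \<circ> W ^^ k \<circ> V \<circ> inv (W ^^ k) \<circ> inv H \<circ> W ^^ k \<circ> inv V"
proof -
  interpret V: shrinking_orbit V K c1 \<delta>1
    by (rule V)
  interpret W: shrinking_orbit W L c2 \<delta>2
    by (rule W)
  define A where "A k = V.orbit_product (\<lambda>_. y k)" for k
  have A_in: "A k \<in> ball_homeos" for k
    unfolding A_def by (rule V.orbit_product_in) (use y_in y_fixed in auto)
  have A_fixed: "A k z = z" if "z \<notin> L" for k z
    unfolding A_def using that V_orbit by (intro V.orbit_product_outside) blast
  have A_comp: "A k (V z) = y k (V (A k z))" for k z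
    unfolding A_def by (rule V.orbit_product_const_comp[OF y_in y_fixed])
  define H where "H = W.orbit_product A"
  have H_in: "H \<in> ball_homeos"
    unfolding H_def by (rule W.orbit_product_in) (use A_in A_fixed in auto)
  define \<Phi> where "\<Phi> k = inv (W ^^ k) \<circ> H \<circ> W ^^ k" for k
  define \<Psi> where "\<Psi> k = inv (W ^^ k) \<circ> inv H \<circ> W ^^ k" for k
  have \<Phi>_in: "\<Phi> k \<in> ball_homeos" for k
    unfolding \<Phi>_def by (intro ball_homeos_comp ball_homeos_inv W.funpow_in H_in)
  have \<Phi>_\<Psi>: "\<Phi> k (\<Psi> k x) = x" for k x
    using H_in W.funpow_in by (simp add: \<Phi>_def \<Psi>_def)
  have \<Phi>_L: "\<Phi> k z = A k z" if "z \<in> L" for k z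
    using W.orbit_product_funpow[OF A_in A_fixed that] W.funpow_in by (simp add: \<Phi>_def H_def)
  have "K \<subseteq> L"
    using V_orbit[of 0] by simp
  have commute: "y k (V (\<Phi> k z)) = \<Phi> k (V z)" for k z
    by (rule commute_if_agrees_on[where y = "y k" and A = "A k" and \<Phi> = "\<Phi> k",
          OF \<Phi>_in A_in A_fixed V.v_in V_fixed y_fixed \<open>K \<subseteq> L\<close> \<Phi>_L A_comp])
  have "y k x = \<Phi> k (V (\<Psi> k (inv V x)))" for k x
    using commute[of k "\<Psi> k (inv V x)"] by (simp only: \<Phi>_\<Psi> ball_homeos_f_inv_f[OF V.v_in])
  then have "y k = \<Phi> k \<circ> V \<circ> \<Psi> k \<circ> inv V" for k
    by (intro ext) (simp only: comp_apply)
  then show ?thesis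
    using H_in by (intro that) (simp_all only: \<Phi>_def \<Psi>_def o_assoc)
qed

lemma nested_shrinking_orbits:
  obtains V :: "'a::euclidean_space \<Rightarrow> 'a" and c1 \<delta>1 W L c2 \<delta>2
  where "shrinking_orbit V (cball 0 (1/100)) c1 \<delta>1" "shrinking_orbit W L c2 \<delta>2"
    and "\<And>z. z \<notin> L \<Longrightarrow> V z = z" and "\<And>i. (V ^^ i) ` cball 0 (1/100) \<subseteq> L"
proof -
  obtain e :: 'a where "e \<in> Basis"
    using nonempty_Basis by blast
  then have e: "norm e = 1"
    by simp
  define c1 :: 'a where "c1 = (3/100) *\<^sub>R e"
  define c2 :: 'a where "c2 = (23/100) *\<^sub>R e"
  define L where "L = cball c1 (7/100)"
  have norm_c: "norm c1 = 3/100" "norm c2 = 23/100" "norm (c1 - c2) = 20/100"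
    using e by (simp_all add: c1_def c2_def flip: scaleR_diff_left)
  have "cball 0 (1/100) \<subseteq> annulus c1 (2/100) (4/100)"
    using cball_subset_annulus[of 0 "1/100" c1] norm_c by simp
  then have V: "shrinking_orbit (contraction_at c1 (4/100)) (cball 0 (1/100)) c1 (4/100)"
    by (rule shrinking_orbit_contraction_at[rotated 2]) (use norm_c in auto)
  have "L \<subseteq> annulus c2 (13/100) (27/100)"
    using cball_subset_annulus[of c1 "7/100" c2] norm_c by (simp add: L_def)
  then have W: "shrinking_orbit (contraction_at c2 (28/100)) L c2 (27/100)"
    by (rule shrinking_orbit_contraction_at[rotated 2]) (use norm_c in auto)
  show thesis
  proof (rule that[OF V W])
    show "contraction_at c1 (4/100) z = z" if "z \<notin> L" for z
      using that by (intro contraction_at_far) (auto simp: L_def dist_norm norm_minus_commute)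
    have "cball c1 (4/100 / 2 ^ i) \<subseteq> L" for i
    proof -
      have "(4/100::real) / 2 ^ i \<le> 4/100 / 1"
        by (intro divide_left_mono) auto
      also have "\<dots> \<le> 7/100"
        by simp
      finally have "(4/100::real) / 2 ^ i \<le> 7/100" .
      then show ?thesis
        unfolding L_def by (rule subset_cball)
    qed
    then show "(contraction_at c1 (4/100) ^^ i) ` cball 0 (1/100) \<subseteq> L" for i
      using shrinking_orbit.orbit_shrinks[OF V, of i] by blast
  qed
qed

lemma small_ball_sequence_eq_commutators:
  assumes y_in: "\<And>k. y k \<in> ball_homeos"
    and y_fixed: "\<And>k z. z \<notin> cball 0 (1/100) \<Longrightarrow> y k z = z"
  obtains V W H :: "'a::euclidean_space \<Rightarrow> 'a" where "{V, W, H} \<subseteq> ball_homeos"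
    and "\<And>k. y k = inv (W ^^ k) \<circ> H \<circ> W ^^ k \<circ> V \<circ> inv (W ^^ k) \<circ> inv H \<circ> W ^^ k \<circ> inv V"
proof -
  obtain V :: "'a \<Rightarrow> 'a" and c1 \<delta>1 W L c2 \<delta>2
    where V: "shrinking_orbit V (cball 0 (1/100)) c1 \<delta>1" and W: "shrinking_orbit W L c2 \<delta>2"
      and V_fixed: "\<And>z. z \<notin> L \<Longrightarrow> V z = z"
      and V_orbit: "\<And>i. (V ^^ i) ` cball 0 (1/100) \<subseteq> L"
    using nested_shrinking_orbits by blast
  obtain H where "H \<in> ball_homeos" and
    "\<And>k. y k = inv (W ^^ k) \<circ> H \<circ> W ^^ k \<circ> V \<circ> inv (W ^^ k) \<circ> inv H \<circ> W ^^ k \<circ> inv V"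
    using supported_sequence_eq_commutators[where y = y, OF V W V_fixed V_orbit y_in y_fixed]
    by blast
  moreover have "{V, W} \<subseteq> ball_homeos"
    using shrinking_orbit.v_in[OF V] shrinking_orbit.v_in[OF W] by simp
  ultimately show thesis
    using that by blast
qed

definition distortion_word ::
  "('a \<Rightarrow> 'a) \<Rightarrow> ('a \<Rightarrow> 'a) \<Rightarrow> ('a \<Rightarrow> 'a) \<Rightarrow> ('a \<Rightarrow> 'a) \<Rightarrow> ('a \<Rightarrow> 'a) \<Rightarrow> nat \<Rightarrow> ('a \<Rightarrow> 'a) list"
where
  "distortion_word P Q V W H k =
     [P] @ replicate k Q @ replicate k (inv W) @ [H] @ replicate k W @ [V] @
     replicate k (inv W) @ [inv H] @ replicate k W @ [inv V] @ replicate k (inv Q) @ [inv P]"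

lemma length_distortion_word: "length (distortion_word P Q V W H k) = 6 * k + 6"
  by (simp add: distortion_word_def)

lemma set_distortion_word:
  "set (distortion_word P Q V W H k) \<subseteq> {P, inv P, Q, inv Q, V, inv V, W, inv W, H, inv H}"
  by (auto simp: distortion_word_def)

lemma foldr_comp_Cons: "foldr (\<circ>) (f # fs) id = f \<circ> foldr (\<circ>) fs id"
  by simp

lemma foldr_comp_closed:
  assumes "id \<in> G" and "\<And>f g. f \<in> G \<Longrightarrow> g \<in> G \<Longrightarrow> f \<circ> g \<in> G"
  shows "set fs \<subseteq> G \<Longrightarrow> foldr (\<circ>) fs id \<in> G"
proof (induct fs)
  case (Cons f fs)
  then have "f \<in> G" "set fs \<subseteq> G"
    by simp_all
  then show ?case
    unfolding foldr_comp_Cons by (rule assms(2)[OF _ Cons.hyps])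
qed (simp only: foldr.simps(1) id_apply assms(1))

lemma foldr_comp_map:
  assumes "h id = id" and hom: "\<And>f g. f \<in> G \<Longrightarrow> g \<in> G \<Longrightarrow> h (f \<circ> g) = h f \<circ> h g"
    and G: "id \<in> G" "\<And>f g. f \<in> G \<Longrightarrow> g \<in> G \<Longrightarrow> f \<circ> g \<in> G"
  shows "set fs \<subseteq> G \<Longrightarrow> h (foldr (\<circ>) fs id) = foldr (\<circ>) (map h fs) id"
proof (induct fs)
  case (Cons f fs)
  then have "f \<in> G" "set fs \<subseteq> G"
    by simp_all
  have "h (foldr (\<circ>) (f # fs) id) = h (f \<circ> foldr (\<circ>) fs id)"
    by (simp only: foldr_comp_Cons)
  also have "\<dots> = h f \<circ> h (foldr (\<circ>) fs id)"
    by (rule hom[OF \<open>f \<in> G\<close> foldr_comp_closed[OF G \<open>set fs \<subseteq> G\<close>]])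
  also have "\<dots> = foldr (\<circ>) (map h (f # fs)) id"
    by (simp only: Cons.hyps[OF \<open>set fs \<subseteq> G\<close>] list.map foldr_comp_Cons)
  finally show ?case .
qed (simp add: assms(1))
lemma foldr_comp_append: "foldr (\<circ>) (xs @ ys) id = foldr (\<circ>) xs id \<circ> foldr (\<circ>) ys id"
  by (induction xs) (auto simp: o_assoc)

lemma foldr_comp_replicate: "foldr (\<circ>) (replicate k f) id = f ^^ k"
  by (induction k) auto

lemma foldr_distortion_word:
  "foldr (\<circ>) (distortion_word P Q V W H k) id =
     P \<circ> Q ^^ k \<circ> inv W ^^ k \<circ> H \<circ> W ^^ k \<circ> V \<circ> inv W ^^ k \<circ> inv H \<circ> W ^^ k \<circ> inv V \<circ>
     inv Q ^^ k \<circ> inv P"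
  unfolding distortion_word_def foldr_comp_append foldr_comp_replicate by (simp add: o_assoc)

text \<open>Conjugating \<open>g k\<close> by \<open>push_map r \<circ> gap_squaring\<^sup>k\<close> moves its support into the ball
  of radius \<open>1/100\<close>, where the previous lemma applies.\<close>

lemma ball_homeos_sequence_eq_words:
  fixes g :: "nat \<Rightarrow> 'a::euclidean_space \<Rightarrow> 'a" and r :: "nat \<Rightarrow> real"
  assumes g_in: "\<And>k. g k \<in> ball_homeos" and r_less: "\<And>k. r k < 1"
    and g_fixed: "\<And>k z. r k < norm z \<Longrightarrow> g k z = z"
  obtains P Q V W H where "{P, Q, V, W, H} \<subseteq> ball_homeos"
    and "\<And>k. g k = foldr (\<circ>) (distortion_word P Q V W H k) id"
proof -
  define P :: "'a \<Rightarrow> 'a" where "P = push_map r"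
  define Q :: "'a \<Rightarrow> 'a" where "Q = gap_squaring"
  have P: "P \<in> ball_homeos" and Q: "Q \<in> ball_homeos"
    unfolding P_def Q_def using push_map_in_ball_homeos[OF r_less] gap_squaring_in_ball_homeos .
  have push: "r k < norm (P ((Q ^^ k) z))" if "1/100 < norm z" for k z
    unfolding P_def Q_def using less_norm_push_map[OF r_less] orbit_radius_less_norm_funpow_gap_squaring[OF that] .
  define y where "y k = inv (Q ^^ k) \<circ> inv P \<circ> g k \<circ> P \<circ> Q ^^ k" for k
  have Q_pow: "Q ^^ k \<in> ball_homeos" for k
    using Q by (rule ball_homeos_funpow)
  have y_in: "y k \<in> ball_homeos" for k
    unfolding y_def using P Q_pow g_in by (intro ball_homeos_comp ball_homeos_inv)
  have y_fixed: "y k z = z" if "z \<notin> cball 0 (1/100)" for k z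
  proof -
    have "g k (P ((Q ^^ k) z)) = P ((Q ^^ k) z)"
      using that by (intro g_fixed push) simp
    then show ?thesis
      using P Q_pow by (simp add: y_def)
  qed
  obtain V W H :: "'a \<Rightarrow> 'a" where VWH: "{V, W, H} \<subseteq> ball_homeos" and y_eq:
    "\<And>k. y k = inv (W ^^ k) \<circ> H \<circ> W ^^ k \<circ> V \<circ> inv (W ^^ k) \<circ> inv H \<circ> W ^^ k \<circ> inv V"
    using small_ball_sequence_eq_commutators[where y = y, OF y_in y_fixed] by blast
  have "g k = P \<circ> Q ^^ k \<circ> y k \<circ> inv (Q ^^ k) \<circ> inv P" for k
  proof
    fix x
    show "g k x = (P \<circ> Q ^^ k \<circ> y k \<circ> inv (Q ^^ k) \<circ> inv P) x"
      using P Q_pow by (simp add: y_def)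
  qed
  moreover have "inv (Q ^^ k) = inv Q ^^ k" "inv (W ^^ k) = inv W ^^ k" for k
    using Q VWH by (simp_all add: inv_fn ball_homeos_bij)
  ultimately have "g k = foldr (\<circ>) (distortion_word P Q V W H k) id" for k
    by (simp only: foldr_distortion_word y_eq o_assoc)
  moreover have "{P, Q, V, W, H} \<subseteq> ball_homeos"
    using P Q VWH by simp
  ultimately show thesis
    using that by blast
qed

section \<open>Transfer to a standard ball in a manifold\<close>

lemma no_continuous_inj_on_sphere_lowdim_affine:
  fixes F :: "'a::euclidean_space \<Rightarrow> 'b::euclidean_space"
  assumes cont: "continuous_on (sphere 0 1) F" and inj: "inj_on F (sphere 0 1)"
    and F_in: "F \<in> sphere 0 1 \<rightarrow> T" and T: "affine T" "aff_dim T < DIM('a)"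
  shows False
proof -
  have "openin (top_of_set T) (F ` sphere 0 1)"
    by (rule invariance_of_domain_sphere_affine_set[where a = 0 and r = 1, OF cont inj F_in _ T])
      simp_all
  moreover have compact: "compact (F ` sphere 0 1)"
    by (rule compact_continuous_image[OF cont]) simp
  then have "closedin (top_of_set T) (F ` sphere 0 1)"
    using F_in by (intro closed_subset compact_imp_closed) auto
  moreover obtain e :: 'a where e: "e \<in> Basis"
    using nonempty_Basis by blast
  then have e_sphere: "e \<in> sphere 0 1" "- e \<in> sphere 0 1"
    by auto
  moreover have "connected T"
    using T(1) by (simp add: affine_imp_convex convex_connected)
  ultimately have F_eq: "F ` sphere 0 1 = T"
    using connected_clopen by blast
  then have "bounded T"
    using compact compact_imp_bounded by auto
  then obtain a where "T = {a}"
    using affine_bounded_eq_trivial[OF T(1)] F_eq e_sphere by blast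
  then have "F e = F (- e)"
    using F_eq e_sphere by (metis image_eqI singletonD)
  then have "e = - e"
    using inj e_sphere by (meson inj_onD)
  then have "2 *\<^sub>R e = 0"
    by (metis add.right_inverse scaleR_2)
  then show False
    using e by (simp add: nonzero_Basis)
qed

text \<open>A punctured sphere is homeomorphic to a hyperplane, into which the sphere cannot be
  embedded.\<close>

lemma continuous_inj_on_sphere_image_eq:
  fixes f :: "'a::euclidean_space \<Rightarrow> 'a"
  assumes cont: "continuous_on (sphere 0 1) f" and inj: "inj_on f (sphere 0 1)"
    and image: "f ` sphere 0 1 \<subseteq> sphere 0 1"
  shows "f ` sphere 0 1 = sphere 0 1"
proof (rule ccontr)
  assume "f ` sphere 0 1 \<noteq> sphere 0 1"
  then obtain q where q: "q \<in> sphere 0 1" and im: "f ` sphere 0 1 \<subseteq> sphere 0 1 - {q}"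
    using image by blast
  obtain T :: "'a set" where T: "affine T" "aff_dim T = int DIM('a) - 1"
    using choose_affine_subset[of "UNIV :: 'a set" "int DIM('a) - 1"] by (auto simp: aff_dim_UNIV)
  have "(sphere (0::'a) 1 - {q}) homeomorphic T"
    by (rule homeomorphic_punctured_sphere_affine) (use q T in auto)
  then obtain k k' where k: "homeomorphism (sphere (0::'a) 1 - {q}) T k k'"
    by (auto simp: homeomorphic_def)
  show False
  proof (rule no_continuous_inj_on_sphere_lowdim_affine)
    show "continuous_on (sphere 0 1) (k \<circ> f)"
      by (rule continuous_on_compose[OF cont]) (meson continuous_on_subset k homeomorphism_cont1 im)
    show "inj_on (k \<circ> f) (sphere 0 1)"
      using inj im k
      by (intro comp_inj_on) (auto simp: homeomorphism_def intro: inj_on_subset inj_on_inverseI)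
    show "k \<circ> f \<in> sphere 0 1 \<rightarrow> T"
    proof
      fix x :: 'a assume "x \<in> sphere 0 1"
      then have "f x \<in> sphere 0 1 - {q}"
        using im by blast
      then show "(k \<circ> f) x \<in> T"
        using homeomorphism_image1[OF k] by auto
    qed
  qed (use T in auto)
qed

lemma invariance_of_domain_manifold:
  fixes \<phi> :: "'m::{t2_space, second_countable_topology} \<Rightarrow> real^'n::finite"
  assumes man: "topological_manifold TYPE('m) TYPE('n)" and U: "open U"
    and cont: "continuous_on U \<phi>" and inj: "inj_on \<phi> U"
  shows "open (\<phi> ` U)"
proof (subst open_subopen, intro ballI)
  fix y assume "y \<in> \<phi> ` U"
  then obtain x where x: "x \<in> U" and y: "y = \<phi> x"
    by blast
  obtain C D where C: "open C" "x \<in> C" and D: "open (D :: (real^'n) set)" "C homeomorphic D"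
    using man unfolding topological_manifold_def by blast
  then obtain \<kappa> \<kappa>' where \<kappa>: "homeomorphism C D \<kappa> \<kappa>'"
    by (auto simp: homeomorphic_def)
  define W where "W = C \<inter> U"
  have W_sub: "W \<subseteq> C" "W \<subseteq> U"
    by (auto simp: W_def)
  have \<kappa>'_\<kappa>: "\<kappa>' (\<kappa> w) = w" if "w \<in> W" for w
    using that W_sub homeomorphism_apply1[OF \<kappa>] by blast
  have "openin (top_of_set D) (\<kappa> ` W)"
    using homeomorphism_imp_open_map[OF \<kappa>] U C(1) by (simp add: W_def openin_open_Int)
  then have "open (\<kappa> ` W)"
    using D(1) openin_open_trans by blast
  moreover have "continuous_on (\<kappa> ` W) (\<phi> \<circ> \<kappa>')"
  proof (rule continuous_on_compose)
    show "continuous_on (\<kappa> ` W) \<kappa>'"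
      using homeomorphism_cont2[OF \<kappa>] homeomorphism_image1[OF \<kappa>] W_sub
      by (meson continuous_on_subset image_mono)
    have "\<kappa>' ` \<kappa> ` W = W"
      using \<kappa>'_\<kappa> by (force simp: image_comp)
    then show "continuous_on (\<kappa>' ` \<kappa> ` W) \<phi>"
      using cont W_sub continuous_on_subset by metis
  qed
  moreover have "inj_on (\<phi> \<circ> \<kappa>') (\<kappa> ` W)"
    using inj W_sub \<kappa>'_\<kappa> by (auto simp: inj_on_def)
  ultimately have "open ((\<phi> \<circ> \<kappa>') ` \<kappa> ` W)"
    by (intro invariance_of_domain_gen) auto
  moreover have "(\<phi> \<circ> \<kappa>') ` \<kappa> ` W = \<phi> ` W"
    using \<kappa>'_\<kappa> by (force simp: image_comp)
  ultimately show "\<exists>T. open T \<and> y \<in> T \<and> T \<subseteq> \<phi> ` U"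
    using x y C(2) W_sub by (auto simp: W_def)
qed

lemma continuous_inj_on_sphere_onto_homeomorphic:
  fixes \<psi> :: "'a::euclidean_space \<Rightarrow> 'b::topological_space"
  assumes S: "S homeomorphic sphere (0::'a) 1" and cont: "continuous_on (sphere 0 1) \<psi>"
    and inj: "inj_on \<psi> (sphere 0 1)" and image: "\<psi> ` sphere 0 1 \<subseteq> S"
  shows "\<psi> ` sphere 0 1 = S"
proof -
  obtain h h' where h: "homeomorphism S (sphere (0::'a) 1) h h'"
    using S by (auto simp: homeomorphic_def)
  have "continuous_on (sphere 0 1) (h \<circ> \<psi>)"
    using cont continuous_on_subset[OF homeomorphism_cont1[OF h] image]
    by (rule continuous_on_compose)
  moreover have "inj_on (h \<circ> \<psi>) (sphere 0 1)"
  proof (rule inj_on_inverseI[where g = "inv_into (sphere 0 1) \<psi> \<circ> h'"])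
    fix z :: 'a assume "z \<in> sphere 0 1"
    moreover from this have "\<psi> z \<in> S"
      using image by blast
    ultimately show "(inv_into (sphere 0 1) \<psi> \<circ> h') ((h \<circ> \<psi>) z) = z"
      using homeomorphism_apply1[OF h] inv_into_f_f[OF inj] by simp
  qed
  moreover have "(h \<circ> \<psi>) ` sphere 0 1 \<subseteq> sphere 0 1"
    using image homeomorphism_image1[OF h] by (auto simp: image_comp[symmetric])
  ultimately have "(h \<circ> \<psi>) ` sphere 0 1 = sphere 0 1"
    by (rule continuous_inj_on_sphere_image_eq)
  then have h\<psi>: "h ` \<psi> ` sphere 0 1 = sphere 0 1"
    by (simp add: image_comp)
  have "p \<in> \<psi> ` sphere 0 1" if "p \<in> S" for p
  proof -
    have "h p \<in> h ` \<psi> ` sphere 0 1"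
      using that h\<psi> homeomorphism_image1[OF h] by blast
    then obtain z where z: "z \<in> sphere 0 1" "h p = h (\<psi> z)"
      by blast
    moreover have "\<psi> z \<in> S"
      using image z(1) by blast
    ultimately have "p = \<psi> z"
      using that by (metis homeomorphism_apply1[OF h])
    with \<open>z \<in> sphere 0 1\<close> show ?thesis
      by blast
  qed
  with image show ?thesis
    by blast
qed

lemma homeomorphism_closure_image_subset_ball:
  fixes B :: "'m::{t2_space, second_countable_topology} set" and \<phi> :: "'m \<Rightarrow> real^'n::finite"
  assumes man: "topological_manifold TYPE('m) TYPE('n)" and B: "open B"
    and \<phi>: "homeomorphism (closure B) (cball 0 1) \<phi> \<psi>"
  shows "\<phi> ` B \<subseteq> ball 0 1"
proof -
  have "continuous_on B \<phi>"
    using homeomorphism_cont1[OF \<phi>] closure_subset by (rule continuous_on_subset)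
  moreover have "inj_on \<phi> B"
    by (rule inj_on_inverseI[where g = \<psi>]) (use homeomorphism_apply1[OF \<phi>] closure_subset in blast)
  ultimately have "open (\<phi> ` B)"
    by (rule invariance_of_domain_manifold[OF man B])
  moreover have "\<phi> ` B \<subseteq> cball 0 1"
    using homeomorphism_image1[OF \<phi>] closure_subset by blast
  ultimately have "\<phi> ` B \<subseteq> interior (cball 0 1)"
    by (intro interior_maximal)
  then show ?thesis
    by simp
qed

text \<open>This is where the frontier of a standard ball must be a sphere: otherwise points of the
  frontier could be mapped into the open ball.\<close>

lemma homeomorphism_closure_image_frontier:
  fixes B :: "'m::topological_space set" and \<phi> :: "'m \<Rightarrow> 'a::euclidean_space"
  assumes B: "open B" and \<phi>: "homeomorphism (closure B) (cball 0 1) \<phi> \<psi>"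
    and B_ball: "\<phi> ` B \<subseteq> ball 0 1" and frontier: "frontier B homeomorphic sphere (0::'a) 1"
  shows "\<phi> ` frontier B = sphere 0 1"
proof -
  have frontier_eq: "frontier B = closure B - B"
    using B by (simp add: frontier_def interior_open)
  have sphere_sub: "sphere 0 1 \<subseteq> \<phi> ` frontier B"
  proof
    fix y :: 'a assume y: "y \<in> sphere 0 1"
    then obtain x where x: "x \<in> closure B" "y = \<phi> x"
      using homeomorphism_image1[OF \<phi>] by (metis image_iff sphere_cball subsetD)
    moreover have "x \<notin> B"
    proof
      assume "x \<in> B"
      then have "\<phi> x \<in> ball 0 1"
        using B_ball by blast
      with x y show False
        by simp
    qed
    ultimately show "y \<in> \<phi> ` frontier B"
      using frontier_eq by blast
  qed
  have "\<psi> ` sphere 0 1 \<subseteq> frontier B"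
  proof
    fix z assume "z \<in> \<psi> ` sphere 0 1"
    then obtain p where "p \<in> frontier B" "z = \<psi> (\<phi> p)"
      using sphere_sub by blast
    then show "z \<in> frontier B"
      using homeomorphism_apply1[OF \<phi>] frontier_eq by auto
  qed
  moreover have "continuous_on (sphere 0 1) \<psi>"
    using homeomorphism_cont2[OF \<phi>] by (rule continuous_on_subset) auto
  moreover have "inj_on \<psi> (sphere 0 1)"
    by (rule inj_on_inverseI[where g = \<phi>]) (simp add: homeomorphism_apply2[OF \<phi>])
  ultimately have "\<psi> ` sphere 0 1 = frontier B"
    using frontier by (intro continuous_inj_on_sphere_onto_homeomorphic)
  moreover have "(\<phi> \<circ> \<psi>) ` sphere 0 1 = (\<lambda>y. y) ` sphere 0 1"
    using homeomorphism_apply2[OF \<phi>] by (intro image_cong) auto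
  ultimately show ?thesis
    by (metis image_comp image_ident)
qed

lemma standard_ball_chart_image:
  fixes B :: "'m::{t2_space, second_countable_topology} set" and \<phi> :: "'m \<Rightarrow> real^'n::finite"
  assumes man: "topological_manifold TYPE('m) TYPE('n)" and B: "open B"
    and \<phi>: "homeomorphism (closure B) (cball 0 1) \<phi> \<psi>"
    and frontier: "frontier B homeomorphic sphere (0::real^'n) 1"
  shows "\<phi> ` B = ball 0 1" and "\<phi> ` frontier B = sphere 0 1"
proof -
  have B_ball: "\<phi> ` B \<subseteq> ball 0 1"
    by (rule homeomorphism_closure_image_subset_ball[OF man B \<phi>])
  show frontier_sphere: "\<phi> ` frontier B = sphere 0 1"
    by (rule homeomorphism_closure_image_frontier[OF B \<phi> B_ball frontier])
  have "ball 0 1 \<subseteq> \<phi> ` B"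
  proof
    fix y :: "real^'n" assume y: "y \<in> ball 0 1"
    then obtain x where x: "x \<in> closure B" "y = \<phi> x"
      using homeomorphism_image1[OF \<phi>] by (metis ball_subset_cball image_iff subsetD)
    moreover have "x \<notin> frontier B"
    proof
      assume "x \<in> frontier B"
      then have "\<phi> x \<in> sphere 0 1"
        using frontier_sphere by blast
      with x y show False
        by simp
    qed
    ultimately show "y \<in> \<phi> ` B"
      using B by (auto simp: frontier_def interior_open)
  qed
  with B_ball show "\<phi> ` B = ball 0 1"
    by blast
qed

lemma continuous_map_compact_open_topology:
  fixes F :: "'a::topological_space \<Rightarrow> 'b::topological_space \<Rightarrow> 'c::topological_space"
  assumes cont: "continuous_on (S \<times> UNIV) (\<lambda>p. F (fst p) (snd p))"
  shows "continuous_map (top_of_set S) compact_open_topology F"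
  unfolding compact_open_topology_def
proof (rule continuous_on_generated_topo_iff[THEN iffD2], intro conjI allI impI)
  fix U :: "('b \<Rightarrow> 'c) set"
  assume "U \<in> {{f. f ` K \<subseteq> V} |K V. compact K \<and> open V}"
  then obtain K V where U: "U = {f. f ` K \<subseteq> V}" and K: "compact K" and V: "open V"
    by blast
  obtain W where W: "open W" "W \<inter> (S \<times> UNIV) = (\<lambda>p. F (fst p) (snd p)) -` V \<inter> (S \<times> UNIV)"
    using cont V unfolding continuous_on_open_invariant by blast
  have "\<exists>T. openin (top_of_set S) T \<and> t0 \<in> T \<and> T \<subseteq> F -` U \<inter> S"
    if t0: "t0 \<in> S" "F t0 ` K \<subseteq> V" for t0
  proof -
    have "(t0, x) \<in> W" if "x \<in> K" for x
    proof -
      have "(t0, x) \<in> (\<lambda>p. F (fst p) (snd p)) -` V \<inter> (S \<times> UNIV)"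
        using that t0 by auto
      then show ?thesis
        using W(2) by blast
    qed
    then have "{t0} \<times> K \<subseteq> W"
      by auto
    then obtain X where X: "t0 \<in> X" "open X" "X \<times> K \<subseteq> W"
      using Elementary_Topology.tube_lemma[OF K W(1)] by blast
    have "F t x \<in> V" if "t \<in> S \<inter> X" "x \<in> K" for t x
    proof -
      have "(t, x) \<in> W \<inter> (S \<times> UNIV)"
        using that X(3) by auto
      then show ?thesis
        using W(2) by auto
    qed
    then show ?thesis
      using X t0(1) U by (intro exI[of _ "S \<inter> X"]) (auto intro: openin_open_Int)
  qed
  then show "openin (top_of_set S) (F -` U \<inter> topspace (top_of_set S))"
    using U by (subst openin_subopen) auto
next
  have "UNIV \<in> {{f::'b \<Rightarrow> 'c. f ` K \<subseteq> V} |K V. compact K \<and> open V}"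
    by (rule CollectI, rule exI[of _ "{}"], rule exI[of _ UNIV]) auto
  then show "F ` topspace (top_of_set S) \<subseteq> \<Union> {{f. f ` K \<subseteq> V} |K V. compact K \<and> open V}"
    by blast
qed

lemma isotopic_to_id_in_Homeo0:
  fixes F :: "real \<Rightarrow> 'a::topological_space \<Rightarrow> 'a"
  assumes cont: "continuous_on ({0..1} \<times> UNIV) (\<lambda>p. F (fst p) (snd p))"
    and homeo: "\<And>t. t \<in> {0..1} \<Longrightarrow> F t \<in> Homeo" and "F 0 = id" "F 1 = f"
  shows "f \<in> Homeo0"
proof -
  let ?X = "subtopology compact_open_topology (Homeo :: ('a \<Rightarrow> 'a) set)"
  have "continuous_map (top_of_set {0..1}) ?X F"
    using continuous_map_compact_open_topology[OF cont] homeo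
    by (auto simp: continuous_map_in_subtopology)
  moreover have "connectedin (top_of_set {0..1}) {0..1::real}"
    by (simp add: connectedin_subtopology)
  ultimately have "connectedin ?X (F ` {0..1})"
    by (rule connectedin_continuous_map_image)
  moreover have "id \<in> F ` {0..1}" "f \<in> F ` {0..1}"
    using assms(3,4) by (auto intro: image_eqI[of _ F 0] image_eqI[of _ F 1])
  ultimately have "connected_component_of ?X id f"
    unfolding connected_component_of_def by blast
  then show ?thesis
    unfolding Homeo0_def by simp
qed

text \<open>For \<open>t > 0\<close> this is \<open>g\<close> conjugated by scaling with \<open>t\<close>; the formula is chosen so
  that \<open>t = 0\<close> (where division by \<open>0\<close> yields \<open>0\<close>) gives the identity.\<close>

definition alexander_isotopy :: "('a::euclidean_space \<Rightarrow> 'a) \<Rightarrow> real \<Rightarrow> 'a \<Rightarrow> 'a" where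
  "alexander_isotopy g t y = y + t *\<^sub>R (g (y /\<^sub>R t) - y /\<^sub>R t)"

lemma alexander_isotopy_0 [simp]: "alexander_isotopy g 0 = id"
  by (auto simp: alexander_isotopy_def)

lemma alexander_isotopy_1 [simp]: "alexander_isotopy g 1 = g"
  by (auto simp: alexander_isotopy_def)

lemma alexander_isotopy_pos: "0 < t \<Longrightarrow> alexander_isotopy g t y = t *\<^sub>R g (y /\<^sub>R t)"
  by (simp add: alexander_isotopy_def algebra_simps)

lemma ball_homeos_norm_diff_le: "g \<in> ball_homeos \<Longrightarrow> norm (g z - z) \<le> 2"
  using ball_homeos_fixed[of g z] ball_homeos_norm_le[of g z] norm_triangle_ineq4[of "g z" z]
  by (cases "1 \<le> norm z") auto

lemma alexander_isotopy_in_ball_homeos: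
  assumes g: "g \<in> ball_homeos" and t: "0 \<le> t" "t \<le> 1"
  shows "alexander_isotopy g t \<in> ball_homeos"
proof (cases "t = 0")
  case False
  with t have t_pos: "0 < t"
    by simp
  show ?thesis
    unfolding alexander_isotopy_pos[OF t_pos, abs_def]
  proof (rule ball_homeosI)
    show "continuous_on UNIV (\<lambda>y. t *\<^sub>R g (y /\<^sub>R t))"
      by (intro continuous_intros continuous_on_compose2[OF ball_homeos_continuous_on[OF g]]) auto
    show "inj (\<lambda>y. t *\<^sub>R g (y /\<^sub>R t))"
    proof (rule injI)
      fix x y assume "t *\<^sub>R g (x /\<^sub>R t) = t *\<^sub>R g (y /\<^sub>R t)"
      then have "x /\<^sub>R t = y /\<^sub>R t"
        using t_pos ball_homeos_inj[OF g] by (simp add: inj_eq)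
      then show "x = y"
        using t_pos by simp
    qed
    show "t *\<^sub>R g (x /\<^sub>R t) = x" if "1 \<le> norm x" for x
    proof -
      have "1 \<le> norm x / t"
        using that t t_pos by (simp add: le_divide_eq)
      then have "1 \<le> norm (x /\<^sub>R t)"
        using t_pos by (simp add: divide_inverse_commute)
      then show ?thesis
        using ball_homeos_fixed[OF g] t_pos by simp
    qed
  qed
qed (simp add: ball_homeos_id)

lemma continuous_on_alexander_isotopy:
  fixes g :: "'a::euclidean_space \<Rightarrow> 'a"
  assumes g: "g \<in> ball_homeos"
  shows "continuous_on UNIV (\<lambda>p::real \<times> 'a. alexander_isotopy g (fst p) (snd p))"
  unfolding continuous_on_eq_continuous_at[OF open_UNIV]
proof (intro ballI)
  fix p0 :: "real \<times> 'a"
  show "isCont (\<lambda>p. alexander_isotopy g (fst p) (snd p)) p0"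
  proof (cases "fst p0 = 0")
    case False
    have "isCont (\<lambda>p::real \<times> 'a. snd p /\<^sub>R fst p) p0"
      using False by (intro continuous_intros) auto
    moreover have "isCont g z" for z
      using ball_homeos_continuous_on[OF g, of UNIV] by (simp add: continuous_on_eq_continuous_at)
    ultimately have "isCont (\<lambda>p::real \<times> 'a. g (snd p /\<^sub>R fst p)) p0"
      by (rule isCont_o2)
    then show ?thesis
      unfolding alexander_isotopy_def using False by (intro continuous_intros) auto
  next
    case True
    obtain y0 where p0: "p0 = (0, y0)"
      using True by (metis prod.collapse)
    have "norm (alexander_isotopy g (fst p) (snd p) - y0) \<le> norm (snd p - y0) + 2 * \<bar>fst p\<bar>"
      for p :: "real \<times> 'a"
    proof -
      have "alexander_isotopy g (fst p) (snd p) - y0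
          = (snd p - y0) + fst p *\<^sub>R (g (snd p /\<^sub>R fst p) - snd p /\<^sub>R fst p)"
        by (simp add: alexander_isotopy_def)
      then have "norm (alexander_isotopy g (fst p) (snd p) - y0)
          \<le> norm (snd p - y0) + \<bar>fst p\<bar> * norm (g (snd p /\<^sub>R fst p) - snd p /\<^sub>R fst p)"
        by (metis norm_scaleR norm_triangle_ineq)
      also have "\<dots> \<le> norm (snd p - y0) + \<bar>fst p\<bar> * 2"
        using ball_homeos_norm_diff_le[OF g] by (intro add_left_mono mult_left_mono) auto
      finally show ?thesis
        by simp
    qed
    then have "\<forall>\<^sub>F p in at p0. norm (alexander_isotopy g (fst p) (snd p) - y0)
        \<le> norm (norm (snd p - y0) + 2 * \<bar>fst p\<bar>) * 1"
      by (intro always_eventually allI) simp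
    moreover have "((\<lambda>p::real \<times> 'a. norm (snd p - y0) + 2 * \<bar>fst p\<bar>) \<longlongrightarrow> 0) (at p0)"
    proof -
      have "((\<lambda>p::real \<times> 'a. norm (snd p - y0) + 2 * \<bar>fst p\<bar>)
          \<longlongrightarrow> norm (snd p0 - y0) + 2 * \<bar>fst p0\<bar>) (at p0)"
        by (intro tendsto_intros)
      then show ?thesis
        using p0 by simp
    qed
    ultimately have "((\<lambda>p. alexander_isotopy g (fst p) (snd p) - y0) \<longlongrightarrow> 0) (at p0)"
      by (rule tendsto_0_le[rotated])
    then show ?thesis
      using p0 by (simp add: isCont_def LIM_zero_iff)
  qed
qed

locale ball_chart =
  fixes B :: "'m::topological_space set" and \<phi> :: "'m \<Rightarrow> 'a::euclidean_space" and \<psi> :: "'a \<Rightarrow> 'm"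
  assumes open_B: "open B" and homeo: "homeomorphism (closure B) (cball 0 1) \<phi> \<psi>"
    and image_B: "\<phi> ` B = ball 0 1" and image_frontier: "\<phi> ` frontier B = sphere 0 1"
begin

lemma \<psi>_\<phi>: "x \<in> closure B \<Longrightarrow> \<psi> (\<phi> x) = x"
  using homeo by (simp add: homeomorphism_apply1)

lemma \<phi>_\<psi>: "norm y \<le> 1 \<Longrightarrow> \<phi> (\<psi> y) = y"
  using homeo by (simp add: homeomorphism_apply2)

lemma norm_\<phi>_le: "x \<in> closure B \<Longrightarrow> norm (\<phi> x) \<le> 1"
  using homeomorphism_image1[OF homeo] by auto

lemma \<psi>_in_closure: "norm y \<le> 1 \<Longrightarrow> \<psi> y \<in> closure B"
  using homeomorphism_image2[OF homeo] by auto

lemma continuous_on_\<phi>: "continuous_on (closure B) \<phi>"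
  using homeomorphism_cont1[OF homeo] .

lemma continuous_on_\<psi>: "continuous_on (cball 0 1) \<psi>"
  using homeomorphism_cont2[OF homeo] .

lemma norm_\<phi>_frontier: "x \<in> closure B \<Longrightarrow> x \<notin> B \<Longrightarrow> norm (\<phi> x) = 1"
  using image_frontier open_B by (auto simp: frontier_def interior_open)

lemma \<psi>_notin_B: "norm y = 1 \<Longrightarrow> \<psi> y \<notin> B"
  using image_B \<phi>_\<psi>[of y] by force

definition transplant :: "('a \<Rightarrow> 'a) \<Rightarrow> 'm \<Rightarrow> 'm" where
  "transplant g x = (if x \<in> closure B then \<psi> (g (\<phi> x)) else x)"

lemma transplant_id: "transplant id = id"
  by (auto simp: transplant_def \<psi>_\<phi>)

lemma transplant_comp:
  assumes "g1 \<in> ball_homeos" "g2 \<in> ball_homeos"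
  shows "transplant (g1 \<circ> g2) = transplant g1 \<circ> transplant g2"
proof
  fix x
  show "transplant (g1 \<circ> g2) x = (transplant g1 \<circ> transplant g2) x"
  proof (cases "x \<in> closure B")
    case True
    then have "norm (g2 (\<phi> x)) \<le> 1"
      using assms(2) norm_\<phi>_le ball_homeos_norm_le by blast
    then show ?thesis
      using True \<psi>_in_closure \<phi>_\<psi> by (simp add: transplant_def)
  qed (simp add: transplant_def)
qed

lemma transplant_inj_on: "inj_on transplant ball_homeos"
proof (rule inj_onI)
  fix g1 g2 assume g: "g1 \<in> ball_homeos" "g2 \<in> ball_homeos" and eq: "transplant g1 = transplant g2"
  show "g1 = g2"
  proof
    fix z
    show "g1 z = g2 z"
    proof (cases "1 \<le> norm z")
      case False
      then have "\<psi> (g1 z) = \<psi> (g2 z)"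
        using fun_cong[OF eq, of "\<psi> z"] \<psi>_in_closure \<phi>_\<psi> by (simp add: transplant_def)
      then show ?thesis
        using False g ball_homeos_norm_le \<phi>_\<psi> by (metis linorder_not_le order_less_imp_le)
    qed (simp add: g ball_homeos_fixed)
  qed
qed

lemma continuous_on_transplant_family:
  assumes "continuous_on (S \<times> closure B) (\<lambda>p. \<psi> (G (fst p) (\<phi> (snd p))))"
    and "closed S"
    and "\<And>t x. t \<in> S \<Longrightarrow> x \<in> closure B \<Longrightarrow> x \<notin> B \<Longrightarrow> G t (\<phi> x) = \<phi> x"
  shows "continuous_on (S \<times> UNIV) (\<lambda>p. transplant (G (fst p)) (snd p))"
proof -
  have "continuous_on (S \<times> closure B \<union> S \<times> - B)
      (\<lambda>p. if snd p \<in> closure B then \<psi> (G (fst p) (\<phi> (snd p))) else snd p)"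
  proof (rule continuous_on_cases)
    show "closed (S \<times> - B)"
      using assms(2) open_B by (intro closed_Times) auto
    show "\<forall>p. p \<in> S \<times> closure B \<and> snd p \<notin> closure B \<or> p \<in> S \<times> - B \<and> snd p \<in> closure B \<longrightarrow>
        \<psi> (G (fst p) (\<phi> (snd p))) = snd p"
      using assms(3) \<psi>_\<phi> by (auto simp: mem_Times_iff)
  qed (use assms in \<open>auto intro: closed_Times continuous_on_snd\<close>)
  moreover have "S \<times> closure B \<union> S \<times> - B = S \<times> UNIV"
    using closure_subset by auto
  ultimately show ?thesis
    by (simp add: transplant_def)
qed

lemma continuous_on_transplant_alexander_isotopy:
  assumes g: "g \<in> ball_homeos"
  shows "continuous_on ({0..1} \<times> UNIV) (\<lambda>p. transplant (alexander_isotopy g (fst p)) (snd p))"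
proof (rule continuous_on_transplant_family)
  let ?S = "{0..1::real} \<times> closure B"
  have "continuous_on ?S (\<lambda>p. (fst p, \<phi> (snd p)))"
    by (intro continuous_on_Pair continuous_on_fst continuous_on_id
        continuous_on_compose2[OF continuous_on_\<phi> continuous_on_snd]) auto
  then have "continuous_on ?S (\<lambda>p. alexander_isotopy g (fst p) (\<phi> (snd p)))"
    using continuous_on_compose2[OF continuous_on_alexander_isotopy[OF g], of ?S
        "\<lambda>p. (fst p, \<phi> (snd p))"] by simp
  moreover have "norm (alexander_isotopy g t (\<phi> x)) \<le> 1" if "t \<in> {0..1}" "x \<in> closure B" for t x
    using that
    by (intro ball_homeos_norm_le[OF alexander_isotopy_in_ball_homeos[OF g]] norm_\<phi>_le) auto
  ultimately show "continuous_on ?S (\<lambda>p. \<psi> (alexander_isotopy g (fst p) (\<phi> (snd p))))"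
    by (intro continuous_on_compose2[OF continuous_on_\<psi>]) (auto simp: mem_Times_iff)
  show "alexander_isotopy g t (\<phi> x) = \<phi> x" if "t \<in> {0..1}" "x \<in> closure B" "x \<notin> B" for t x
    using that norm_\<phi>_frontier[of x]
    by (intro ball_homeos_fixed[OF alexander_isotopy_in_ball_homeos[OF g]]) auto
qed simp

lemma continuous_on_transplant:
  assumes g: "g \<in> ball_homeos"
  shows "continuous_on UNIV (transplant g)"
proof -
  have "continuous_on UNIV (\<lambda>x. transplant (alexander_isotopy g (fst (1::real, x))) (snd (1::real, x)))"
    by (rule continuous_on_compose2[OF continuous_on_transplant_alexander_isotopy[OF g]])
      (auto intro: continuous_intros)
  then show ?thesis
    by simp
qed

lemma transplant_in_Homeo:
  assumes g: "g \<in> ball_homeos"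
  shows "transplant g \<in> Homeo"
proof -
  have g_inv: "inv g \<in> ball_homeos"
    using g by (rule ball_homeos_inv)
  have "g \<circ> inv g = id" "inv g \<circ> g = id"
    using ball_homeos_bij[OF g] by (simp_all add: bij_is_surj bij_is_inj flip: surj_iff inj_iff)
  then have "transplant g \<circ> transplant (inv g) = id" "transplant (inv g) \<circ> transplant g = id"
    using transplant_comp[OF g g_inv] transplant_comp[OF g_inv g] transplant_id by metis+
  then have "homeomorphism UNIV UNIV (transplant g) (transplant (inv g))"
    using continuous_on_transplant[OF g] continuous_on_transplant[OF g_inv]
    by (intro homeomorphismI) (auto simp: pointfree_idE)
  then show ?thesis
    unfolding Homeo_def by blast
qed

lemma transplant_in_Homeo0:
  assumes g: "g \<in> ball_homeos"
  shows "transplant g \<in> Homeo0"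
proof (rule isotopic_to_id_in_Homeo0)
  show "continuous_on ({0..1} \<times> UNIV) (\<lambda>p. transplant (alexander_isotopy g (fst p)) (snd p))"
    by (rule continuous_on_transplant_alexander_isotopy[OF g])
  show "transplant (alexander_isotopy g t) \<in> Homeo" if "t \<in> {0..1}" for t
    using that g by (simp add: alexander_isotopy_in_ball_homeos transplant_in_Homeo)
  show "transplant (alexander_isotopy g 0) = id"
    by (simp only: alexander_isotopy_0 transplant_id)
qed simp

end

lemma fixed_outside_support:
  assumes "x \<notin> support f"
  shows "f x = x"
proof (rule ccontr)
  assume "f x \<noteq> x"
  then have "x \<in> support f"
    unfolding support_def by (intro rev_subsetD[OF _ closure_subset]) simp
  with assms show False
    by contradiction
qed

lemma Homeo0_subset_Homeo: "Homeo0 \<subseteq> Homeo"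
proof
  fix f assume "f \<in> Homeo0"
  then have "f \<in> topspace (subtopology compact_open_topology Homeo)"
    unfolding Homeo0_def by (rule subsetD[OF connected_component_of_subset_topspace])
  then show "f \<in> Homeo"
    by simp
qed

lemma compact_subset_ball_norm_le:
  fixes S :: "'a::euclidean_space set"
  assumes "compact S" "S \<subseteq> ball 0 1"
  shows "\<exists>r<1. \<forall>z\<in>S. norm z \<le> r"
proof (cases "S = {}")
  case True
  then show ?thesis
    by (intro exI[of _ 0]) simp
next
  case False
  have "compact (norm ` S)"
    using assms(1) by (intro compact_continuous_image continuous_intros)
  then obtain m where m: "m \<in> norm ` S" "\<forall>y\<in>norm ` S. y \<le> m"
    using False compact_attains_sup by (metis image_is_empty)
  then have "m < 1"
    using assms(2) by auto
  with m(2) show ?thesis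
    by (intro exI[of _ m]) auto
qed

context ball_chart
begin

definition pullback :: "('m \<Rightarrow> 'm) \<Rightarrow> 'a \<Rightarrow> 'a" where
  "pullback f z = (if norm z \<le> 1 then \<phi> (f (\<psi> z)) else z)"

context
  fixes f :: "'m \<Rightarrow> 'm"
  assumes f: "f \<in> Homeo" and f_fixed: "\<And>x. x \<notin> B \<Longrightarrow> f x = x"
begin

lemma inj_f: "inj f"
proof -
  obtain f' where "homeomorphism UNIV UNIV f f'"
    using f unfolding Homeo_def by blast
  then show ?thesis
    by (intro inj_on_inverseI[where g = f']) (simp add: homeomorphism_apply1)
qed

lemma f_in_closure: "x \<in> closure B \<Longrightarrow> f x \<in> closure B"
proof (cases "x \<in> B")
  case True
  have "f x \<in> B"
  proof (rule ccontr)
    assume "f x \<notin> B"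
    then have "f (f x) = f x"
      by (rule f_fixed)
    then have "f x = x"
      by (rule injD[OF inj_f])
    with True \<open>f x \<notin> B\<close> show False
      by simp
  qed
  then show ?thesis
    using closure_subset by blast
qed (simp add: f_fixed)

lemma pullback_sphere:
  assumes "norm z = 1"
  shows "\<phi> (f (\<psi> z)) = z"
proof -
  have "f (\<psi> z) = \<psi> z"
    using \<psi>_notin_B[OF assms] by (rule f_fixed)
  then show ?thesis
    using assms by (simp add: \<phi>_\<psi>)
qed

lemma continuous_on_pullback: "continuous_on UNIV (pullback f)"
proof -
  have "continuous_on UNIV f"
    using f unfolding Homeo_def using homeomorphism_cont1 by blast
  then have "continuous_on (cball 0 1) (\<lambda>z. f (\<psi> z))"
    using continuous_on_\<psi> by (rule continuous_on_compose2) simp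
  moreover have "(\<lambda>z. f (\<psi> z)) ` cball 0 1 \<subseteq> closure B"
    using \<psi>_in_closure f_in_closure by auto
  ultimately have cont: "continuous_on (cball 0 1) (\<lambda>z. \<phi> (f (\<psi> z)))"
    by (rule continuous_on_compose2[OF continuous_on_\<phi>])
  have "closed (- ball (0::'a) 1)"
    by (simp add: closed_Compl)
  moreover have "\<phi> (f (\<psi> z)) = z" if "z \<in> cball 0 1" "z \<in> - ball 0 1" for z
    using that by (intro pullback_sphere) simp
  ultimately have "continuous_on (cball 0 1 \<union> - ball 0 1)
      (\<lambda>z. if z \<in> cball 0 1 then \<phi> (f (\<psi> z)) else z)"
    by (intro continuous_on_cases[OF closed_cball _ cont continuous_on_id]) auto
  moreover have "cball 0 1 \<union> - ball (0::'a) 1 = UNIV"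
    by auto
  ultimately show ?thesis
    by (simp add: pullback_def[abs_def])
qed

lemma pullback_fixed: "1 \<le> norm z \<Longrightarrow> pullback f z = z"
  using pullback_sphere[of z] by (simp add: pullback_def)

lemma norm_pullback_le_1_iff: "norm (pullback f z) \<le> 1 \<longleftrightarrow> norm z \<le> 1"
proof (cases "norm z \<le> 1")
  case True
  then have "norm (\<phi> (f (\<psi> z))) \<le> 1"
    by (intro norm_\<phi>_le f_in_closure \<psi>_in_closure)
  with True show ?thesis
    by (simp add: pullback_def)
qed (simp add: pullback_def)

lemma inj_pullback: "inj (pullback f)"
proof (rule injI)
  fix a b assume eq: "pullback f a = pullback f b"
  show "a = b"
  proof (cases "norm a \<le> 1")
    case True
    moreover have b: "norm b \<le> 1"
      using norm_pullback_le_1_iff[of a] norm_pullback_le_1_iff[of b] eq True by simp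
    ultimately have "\<psi> (\<phi> (f (\<psi> a))) = \<psi> (\<phi> (f (\<psi> b)))"
      using eq by (simp add: pullback_def)
    moreover have "f (\<psi> a) \<in> closure B" "f (\<psi> b) \<in> closure B"
      using True b by (simp_all add: f_in_closure \<psi>_in_closure)
    ultimately have "f (\<psi> a) = f (\<psi> b)"
      by (simp add: \<psi>_\<phi>)
    then have "\<psi> a = \<psi> b"
      by (rule injD[OF inj_f])
    then have "\<phi> (\<psi> a) = \<phi> (\<psi> b)"
      by simp
    then show ?thesis
      using True b by (simp add: \<phi>_\<psi>)
  next
    case False
    moreover have "\<not> norm b \<le> 1"
      using norm_pullback_le_1_iff[of a] norm_pullback_le_1_iff[of b] eq False by simp
    ultimately show ?thesis
      using eq by (simp add: pullback_def)
  qed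
qed

lemma pullback_in_ball_homeos: "pullback f \<in> ball_homeos"
  by (rule ball_homeosI[OF continuous_on_pullback inj_pullback pullback_fixed])

lemma transplant_pullback: "transplant (pullback f) = f"
proof
  fix x
  show "transplant (pullback f) x = f x"
  proof (cases "x \<in> closure B")
    case True
    then show ?thesis
      using norm_\<phi>_le f_in_closure by (simp add: transplant_def pullback_def \<psi>_\<phi>)
  next
    case False
    then have "x \<notin> B"
      using closure_subset by blast
    then show ?thesis
      using False f_fixed by (simp add: transplant_def)
  qed
qed

end

lemma compact_closure: "compact (closure B)"
  using compact_continuous_image[OF continuous_on_\<psi> compact_cball] homeomorphism_image2[OF homeo]
  by simp

lemma supported_Homeo0_eq_transplant:
  assumes f: "f \<in> Homeo0" and supp: "support f \<subseteq> B"
  shows "\<exists>g r. g \<in> ball_homeos \<and> r < 1 \<and> (\<forall>z. r < norm z \<longrightarrow> g z = z) \<and> transplant g = f"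
proof -
  have f_Homeo: "f \<in> Homeo"
    using f Homeo0_subset_Homeo by blast
  have f_fixed: "f x = x" if "x \<notin> B" for x
    using that supp fixed_outside_support by blast
  have "compact (closure B \<inter> support f)"
    using compact_closure by (rule compact_Int_closed) (simp add: support_def)
  moreover have "closure B \<inter> support f = support f"
    using supp closure_subset by blast
  ultimately have "compact (support f)"
    by simp
  then have "compact (\<phi> ` support f)"
    using supp closure_subset
    by (intro compact_continuous_image continuous_on_subset[OF continuous_on_\<phi>]) auto
  moreover have "\<phi> ` support f \<subseteq> ball 0 1"
    using supp image_B by blast
  ultimately have "\<exists>r<1. \<forall>z\<in>\<phi> ` support f. norm z \<le> r"
    by (rule compact_subset_ball_norm_le)
  then obtain r where r: "r < 1" "\<And>z. z \<in> \<phi> ` support f \<Longrightarrow> norm z \<le> r"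
    by blast
  have fixed: "pullback f z = z" if "r < norm z" for z
  proof (cases "norm z \<le> 1")
    case True
    have "\<psi> z \<notin> support f"
    proof
      assume "\<psi> z \<in> support f"
      then have "norm (\<phi> (\<psi> z)) \<le> r"
        by (intro r(2) imageI)
      with True that show False
        by (simp add: \<phi>_\<psi>)
    qed
    then have "f (\<psi> z) = \<psi> z"
      by (rule fixed_outside_support)
    then show ?thesis
      using True by (simp add: pullback_def \<phi>_\<psi>)
  qed (simp add: pullback_def)
  then show ?thesis
    using pullback_in_ball_homeos[where f = f, OF f_Homeo f_fixed] r(1)
      transplant_pullback[where f = f, OF f_Homeo f_fixed]
    by blast
qed

end

section \<open>Strong distortion\<close>

lemma exists_card_superset:
  assumes X: "infinite X" and S0: "finite S0" "S0 \<subseteq> X" "card S0 \<le> m"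
  shows "\<exists>S. S0 \<subseteq> S \<and> S \<subseteq> X \<and> finite S \<and> card S = m"
proof -
  have "infinite (X - S0)"
    using X S0(1) by (rule Diff_infinite_finite[rotated])
  then obtain T where T: "T \<subseteq> X - S0" "finite T" "card T = m - card S0"
    using infinite_arbitrarily_large by blast
  have "card (S0 \<union> T) = card S0 + card T"
    using T S0 by (intro card_Un_disjoint) auto
  then show ?thesis
    using T S0 by (intro exI[of _ "S0 \<union> T"]) auto
qed

lemma word_power_mono: "S \<subseteq> T \<Longrightarrow> word_power S n \<subseteq> word_power T n"
  unfolding word_power_def by blast

lemma strongly_distortedI:
  fixes G A :: "('a \<Rightarrow> 'a) set" and m :: nat and w :: "nat \<Rightarrow> nat"
  assumes G: "infinite G"
    and words: "\<And>a :: nat \<Rightarrow> 'a \<Rightarrow> 'a. (\<forall>k. a k \<in> A) \<Longrightarrow>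
      \<exists>T\<subseteq>G. finite T \<and> card T \<le> m \<and> (\<forall>k. a k \<in> word_power T (w k))"
  shows "strongly_distorted G A"
  unfolding strongly_distorted_def
proof (intro exI[of _ m] exI[of _ w] allI impI)
  fix a :: "nat \<Rightarrow> 'a \<Rightarrow> 'a"
  assume "\<forall>k. a k \<in> A"
  then obtain T where T: "T \<subseteq> G" "finite T" "card T \<le> m" "\<forall>k. a k \<in> word_power T (w k)"
    by (blast dest: words)
  obtain S where S: "T \<subseteq> S" "S \<subseteq> G" "finite S" "card S = m"
    using exists_card_superset[OF G T(2) T(1) T(3)] by blast
  have "\<forall>k. a k \<in> word_power S (w k)"
    using T(4) word_power_mono[OF S(1)] by blast
  then show "\<exists>S\<subseteq>G. finite S \<and> card S = m \<and> (\<forall>k. a k \<in> word_power S (w k))"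
    using S by blast
qed

lemma norm_less_norm_gap_squaring:
  assumes "0 < norm w" "norm w < 1"
  shows "norm w < norm (gap_squaring w)"
proof -
  have "norm w * 1 < norm w * (2 - norm w)"
    using assms by (intro mult_strict_left_mono) auto
  then show ?thesis
    using assms by (simp add: norm_gap_squaring gap_squaring_factor_def)
qed

lemma infinite_ball_homeos: "infinite (ball_homeos :: ('a::euclidean_space \<Rightarrow> 'a) set)"
proof -
  obtain e :: 'a where "e \<in> Basis"
    using nonempty_Basis by blast
  define z where "z = (1/2) *\<^sub>R e"
  have norm_z: "norm z = 1/2"
    using \<open>e \<in> Basis\<close> by (simp add: z_def)
  have less_1: "norm ((gap_squaring ^^ k) z) < 1" for k
    using norm_z by (intro ball_homeos_norm_less[OF ball_homeos_funpow[OF gap_squaring_in_ball_homeos]]) simp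
  have ge: "1/2 \<le> norm ((gap_squaring ^^ k) z)" for k
  proof (induction k)
    case (Suc k)
    then have "0 < norm ((gap_squaring ^^ k) z)"
      by linarith
    then show ?case
      using norm_less_norm_gap_squaring[OF _ less_1[of k]] Suc by simp
  qed (simp add: norm_z)
  have mono: "strict_mono (\<lambda>k. norm ((gap_squaring ^^ k) z))"
  proof (rule strict_monoI_Suc)
    fix k
    have "0 < norm ((gap_squaring ^^ k) z)"
      using ge[of k] by linarith
    then show "norm ((gap_squaring ^^ k) z) < norm ((gap_squaring ^^ Suc k) z)"
      using norm_less_norm_gap_squaring[OF _ less_1[of k]] by simp
  qed
  have "inj (\<lambda>k. (gap_squaring :: 'a \<Rightarrow> 'a) ^^ k)"
  proof (rule injI)
    fix i j assume "(gap_squaring :: 'a \<Rightarrow> 'a) ^^ i = gap_squaring ^^ j"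
    then have "norm ((gap_squaring ^^ i) z) = norm ((gap_squaring ^^ j) z)"
      by simp
    then show "i = j"
      using strict_mono_eq[OF mono] by blast
  qed
  then have "infinite (range (\<lambda>k. (gap_squaring :: 'a \<Rightarrow> 'a) ^^ k))"
    by (rule range_inj_infinite)
  moreover have "range (\<lambda>k. (gap_squaring :: 'a \<Rightarrow> 'a) ^^ k) \<subseteq> ball_homeos"
    using ball_homeos_funpow[OF gap_squaring_in_ball_homeos] by auto
  ultimately show ?thesis
    using infinite_super by blast
qed

lemma ball_chart_if_standard_open_ball:
  fixes B :: "'m::{t2_space, second_countable_topology} set"
  assumes "topological_manifold TYPE('m) TYPE('n::finite)" and "standard_open_ball TYPE('n) B"
  obtains \<phi> :: "'m \<Rightarrow> real^'n" and \<psi> where "ball_chart B \<phi> \<psi>"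
proof -
  have B: "open B" "closure B homeomorphic (cball (0::real^'n) 1)"
      "frontier B homeomorphic (sphere (0::real^'n) 1)"
    using assms(2) unfolding standard_open_ball_def by auto
  then obtain \<phi> :: "'m \<Rightarrow> real^'n" and \<psi> where \<phi>: "homeomorphism (closure B) (cball 0 1) \<phi> \<psi>"
    by (auto simp: homeomorphic_def)
  show thesis
    using standard_ball_chart_image[OF assms(1) B(1) \<phi> B(3)] B(1) \<phi>
    by (intro that) (unfold_locales)
qed

context ball_chart
begin

lemma infinite_Homeo0: "infinite (Homeo0 :: ('m \<Rightarrow> 'm) set)"
proof
  assume "finite (Homeo0 :: ('m \<Rightarrow> 'm) set)"
  moreover have "transplant ` ball_homeos \<subseteq> Homeo0"
    using transplant_in_Homeo0 by blast
  ultimately have "finite (transplant ` ball_homeos)"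
    by (rule finite_subset[rotated])
  then have "finite (ball_homeos :: ('a \<Rightarrow> 'a) set)"
    using transplant_inj_on by (rule finite_imageD)
  then show False
    using infinite_ball_homeos by blast
qed

lemma supported_Homeo0_sequence_words:
  assumes a: "\<And>k. a k \<in> Homeo0" "\<And>k. support (a k) \<subseteq> B"
  shows "\<exists>T\<subseteq>Homeo0. finite T \<and> card T \<le> 10 \<and> (\<forall>k. a k \<in> word_power T (6 * k + 6))"
proof -
  have "\<forall>k. \<exists>g r. g \<in> ball_homeos \<and> r < 1 \<and> (\<forall>z. r < norm z \<longrightarrow> g z = z) \<and> transplant g = a k"
    using supported_Homeo0_eq_transplant[OF a] by blast
  then obtain g r where g: "\<And>k. g k \<in> ball_homeos" "\<And>k. r k < 1"
      "\<And>k z. r k < norm z \<Longrightarrow> g k z = z" "\<And>k. transplant (g k) = a k"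
    by metis
  obtain P Q V W H where PQVWH: "{P, Q, V, W, H} \<subseteq> ball_homeos"
    and g_eq: "\<And>k. g k = foldr (\<circ>) (distortion_word P Q V W H k) id"
    using ball_homeos_sequence_eq_words[of g r] g(1-3) by blast
  define gens where "gens = [P, inv P, Q, inv Q, V, inv V, W, inv W, H, inv H]"
  define T where "T = transplant ` set gens"
  have gens: "set gens \<subseteq> ball_homeos"
    using PQVWH ball_homeos_inv by (auto simp: gens_def)
  have "a k \<in> word_power T (6 * k + 6)" for k
  proof -
    have word: "set (distortion_word P Q V W H k) \<subseteq> set gens"
      using set_distortion_word by (simp add: gens_def)
    have "a k = transplant (foldr (\<circ>) (distortion_word P Q V W H k) id)"
      using g(4)[of k] unfolding g_eq[of k] by (rule sym)
    also have "\<dots> = foldr (\<circ>) (map transplant (distortion_word P Q V W H k)) id"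
      using word gens
      by (intro foldr_comp_map[OF transplant_id transplant_comp ball_homeos_id ball_homeos_comp]) auto
    finally have "a k = foldr (\<circ>) (map transplant (distortion_word P Q V W H k)) id" .
    moreover have "set (map transplant (distortion_word P Q V W H k)) \<subseteq> T"
      using word by (auto simp: T_def)
    moreover have "length (map transplant (distortion_word P Q V W H k)) = 6 * k + 6"
      by (simp add: length_distortion_word)
    ultimately show ?thesis
      unfolding word_power_def by blast
  qed
  moreover have "card T \<le> 10"
    unfolding T_def using card_image_le[of "set gens" transplant] card_length[of gens]
    by (simp add: gens_def)
  moreover have "T \<subseteq> Homeo0"
    using gens transplant_in_Homeo0 unfolding T_def by blast
  ultimately show ?thesis
    unfolding T_def by blast
qed

end

theorem lemma4p3:
  fixes B :: "'m::{t2_space, second_countable_topology} set"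
  assumes "topological_manifold TYPE('m) TYPE('n::finite)"
    and "standard_open_ball TYPE('n) B"
  shows "strongly_distorted (Homeo0 :: ('m \<Rightarrow> 'm) set) {f \<in> Homeo0. support f \<subseteq> B}"
proof -
  obtain \<phi> :: "'m \<Rightarrow> real^'n" and \<psi> where "ball_chart B \<phi> \<psi>"
    using ball_chart_if_standard_open_ball[OF assms] by blast
  then interpret ball_chart B \<phi> \<psi> .
  show ?thesis
    using infinite_Homeo0 supported_Homeo0_sequence_words
    by (intro strongly_distortedI[where m = 10 and w = "\<lambda>k. 6 * k + 6"]) auto
qed

end
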